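(* (i) If the coin process satisfies $\overline H(\mathbf X)=\underline H(\mathbf X)=H(\mathbf X)>0$, then for every target process $\mathbf Y$, \[R^\star_{\mathrm{int}}(\mathbf X,\mathbf Y)=R^\star(\mathbf X,\mathbf Y)=\frac{\overline H(\mathbf Y)}{H(\mathbf X)}.\] (ii) If the target process satisfies $\overline H(\mathbf Y)=\underline H(\mathbf Y)=H(\mathbf Y)$ and the coin process satisfies $\underline H(\mathbf X)>0$, then \[R^\star_{\mathrm{int}}(\mathbf X,\mathbf Y)=R^\star(\mathbf X,\mathbf Y)=\frac{H(\mathbf Y)}{\underline H(\mathbf X)}.\]
   Context: Logarithms are base 2. $\mathcal X$, $\mathcal Y$ are finite; $\mathbf X=\{X^m\}$ (coin) and $\mathbf Y=\{Y^n\}$ (target) are arbitrary processes given by consistent distributions. $\overline H(\mathbf X)=\inf\{\lambda:\lim_n\Pr(\frac1n\log\frac{1}{P_{X^n}(X^n)}\ge\lambda)=0\}$, $\underline H(\mathbf X)=\sup\{\lambda:\lim_n\Pr(\frac1n\log\frac{1}{P_{X^n}(X^n)}\le\lambda)=0\}$, $H(\mathbf X)=\limsup_n\frac1nH(X^n)$; likewise for $\mathbf Y$ (when $\overline H=\underline H$ the limit defining $H$ exists and equals them). A random number generation algorithm for $Y^n$ is a map $\phi:\bigcup_{i\ge0}\mathcal X^i\to\{\bot\}\cup\mathcal Y^n$ whose leaves (finite $s$ with $\phi(s)\in\mathcal Y^n$ and $\phi(s')=\bot$ for all proper prefixes $s'$) satisfy $\sum_{\text{leaves }s:\phi(s)=y^n}P_{X^{|s|}}(s)=P_{Y^n}(y^n)$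 for all $y^n$; its stopping time is the length of the leaf reached by $X_1,X_2,\dots$ ($\infty$ if none). For algorithms $\phi_n$ generating $Y^n$ with stopping times $T_n$, $R$ is achievable if $\lim_n\Pr(T_n>nR)=0$; $R^\star$ is the infimum achievable rate over all valid algorithms and $R^\star_{\mathrm{int}}$ that for the interval algorithm. Interval algorithm: with $\mathcal X=\{1,\dots,M\}$, $\mathcal I_\bot=[0,1)$, $\mathcal I_{sx}=[\underline\alpha_s+(\overline\alpha_s-\underline\alpha_s)\sum_{k<x}P_{X_{i+1}|X^i}(k|s),\ \underline\alpha_s+(\overline\alpha_s-\underline\alpha_s)\sum_{k\le x}P_{X_{i+1}|X^i}(k|s))$ for $s\in\mathcal X^i$ with $\mathcal I_s=[\underline\alpha_s,\overline\alpha_s)$; $\mathcal J_t$ for $t\in\mathcal Y^j$ likewise from $P_{Y_{j+1}|Y^j}$; stop at the first $m$ with $\mathcal I_{X^m}\subseteq\mathcal J_{y^n}$ for some $y^n$ and output that $y^n$. *)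

theory Defs
  imports "HOL-Analysis.Analysis" "HOL-Library.Sublist"
begin

text \<open>A process over a finite alphabet is given by its consistent family of
  finite-dimensional distributions, encoded as one function on words:
  p xs = P_{X^n}(xs) for n = length xs.\<close>

definition process :: "('a::finite list \<Rightarrow> real) \<Rightarrow> bool" where
  "process p \<longleftrightarrow> p [] = 1 \<and> (\<forall>xs. 0 \<le> p xs) \<and>
     (\<forall>xs. p xs = (\<Sum>a\<in>UNIV. p (xs @ [a])))"

definition prob_len :: "('a::finite list \<Rightarrow> real) \<Rightarrow> nat \<Rightarrow> ('a list \<Rightarrow> bool) \<Rightarrow> real" where
  "prob_len p n Q = (\<Sum>xs\<in>{xs. length xs = n \<and> Q xs}. p xs)"

definition info_rate :: "('a list \<Rightarrow> real) \<Rightarrow> nat \<Rightarrow> 'a list \<Rightarrow> real" where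
  "info_rate p n xs = log 2 (1 / p xs) / real n"

definition sup_entropy :: "('a::finite list \<Rightarrow> real) \<Rightarrow> real" where
  "sup_entropy p = Inf {l. (\<lambda>n. prob_len p n (\<lambda>xs. info_rate p n xs \<ge> l)) \<longlonglongrightarrow> 0}"

definition inf_entropy :: "('a::finite list \<Rightarrow> real) \<Rightarrow> real" where
  "inf_entropy p = Sup {l. (\<lambda>n. prob_len p n (\<lambda>xs. info_rate p n xs \<le> l)) \<longlonglongrightarrow> 0}"

definition block_entropy :: "('a::finite list \<Rightarrow> real) \<Rightarrow> nat \<Rightarrow> real" where
  "block_entropy p n = (\<Sum>xs\<in>{xs. length xs = n}. - p xs * log 2 (p xs))"

definition entropy_rate :: "('a::finite list \<Rightarrow> real) \<Rightarrow> real" where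
  "entropy_rate p = real_of_ereal (limsup (\<lambda>n. ereal (block_entropy p n / real n)))"

text \<open>An algorithm is a map from finite coin words to None (standing for bottom)
  or Some target word.\<close>

definition is_leaf :: "('a list \<Rightarrow> 'b list option) \<Rightarrow> 'a list \<Rightarrow> bool" where
  "is_leaf \<phi> s \<longleftrightarrow> \<phi> s \<noteq> None \<and> (\<forall>s'. strict_prefix s' s \<longrightarrow> \<phi> s' = None)"

definition generates ::
  "('a::finite list \<Rightarrow> real) \<Rightarrow> ('b::finite list \<Rightarrow> real) \<Rightarrow> nat \<Rightarrow> ('a list \<Rightarrow> 'b list option) \<Rightarrow> bool" where
  "generates pX pY n \<phi> \<longleftrightarrow>
     (\<forall>s y. \<phi> s = Some y \<longrightarrow> length y = n) \<and>
     (\<forall>y. length y = n \<longrightarrow> (pX has_sum pY y) {s. is_leaf \<phi> s \<and> \<phi> s = Some y})"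

text \<open>Pr(T > t) for the stopping time T of the algorithm: one minus the probability
  of reaching a leaf of length at most t (leaves are prefix-free).\<close>
definition stop_exceeds :: "('a::finite list \<Rightarrow> real) \<Rightarrow> ('a list \<Rightarrow> 'b list option) \<Rightarrow> real \<Rightarrow> real" where
  "stop_exceeds pX \<phi> t = 1 - (\<Sum>s\<in>{s. is_leaf \<phi> s \<and> real (length s) \<le> t}. pX s)"

definition achievable_by ::
  "('a::finite list \<Rightarrow> real) \<Rightarrow> (nat \<Rightarrow> 'a list \<Rightarrow> 'b list option) \<Rightarrow> real \<Rightarrow> bool" where
  "achievable_by pX \<Phi> R \<longleftrightarrow> (\<lambda>n. stop_exceeds pX (\<Phi> n) (real n * R)) \<longlonglongrightarrow> 0"

definition opt_rate :: "('a::finite list \<Rightarrow> real) \<Rightarrow> ('b::finite list \<Rightarrow> real) \<Rightarrow> real" where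
  "opt_rate pX pY = Inf {R. \<exists>\<Phi>. (\<forall>n. generates pX pY n (\<Phi> n)) \<and> achievable_by pX \<Phi> R}"

definition cond_prob :: "('a list \<Rightarrow> real) \<Rightarrow> 'a list \<Rightarrow> 'a \<Rightarrow> real" where
  "cond_prob p s k = p (s @ [k]) / p s"

fun intv_rev :: "('a::{finite,linorder} list \<Rightarrow> real) \<Rightarrow> 'a list \<Rightarrow> real \<times> real" where
  "intv_rev p [] = (0, 1)"
| "intv_rev p (x # rs) =
     (let (a, b) = intv_rev p rs; s = rev rs in
       (a + (b - a) * (\<Sum>k\<in>{k. k < x}. cond_prob p s k),
        a + (b - a) * (\<Sum>k\<in>{k. k \<le> x}. cond_prob p s k)))"

definition intv :: "('a::{finite,linorder} list \<Rightarrow> real) \<Rightarrow> 'a list \<Rightarrow> real set" where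
  "intv p s = (case intv_rev p (rev s) of (a, b) \<Rightarrow> {a..<b})"

definition interval_alg ::
  "('a::{finite,linorder} list \<Rightarrow> real) \<Rightarrow> ('b::{finite,linorder} list \<Rightarrow> real) \<Rightarrow> nat \<Rightarrow> 'a list \<Rightarrow> 'b list option" where
  "interval_alg pX pY n s =
     (if \<exists>y. length y = n \<and> intv pX s \<subseteq> intv pY y
      then Some (SOME y. length y = n \<and> intv pX s \<subseteq> intv pY y) else None)"

definition int_rate ::
  "('a::{finite,linorder} list \<Rightarrow> real) \<Rightarrow> ('b::{finite,linorder} list \<Rightarrow> real) \<Rightarrow> real" where
  "int_rate pX pY = Inf {R. achievable_by pX (interval_alg pX pY) R}"

end

theory Submission
  imports Defs
begin

text \<open>Converse: a leaf of any algorithm that outputs y has probability at most P_Y(y). So if the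
  output is atypically unlikely (information rate above l_Y), the coin prefix of length
  m \<approx> n R that produced it is atypically unlikely as well (rate above n l_Y / m).
  Comparing upper tails gives sup_entropy Y \<le> R sup_entropy X; comparing lower tails, after
  passing from the lengths nat \<lfloor>n R\<rfloor> to all lengths, gives inf_entropy Y \<le> R inf_entropy X.

  Achievability: the interval I_x of a coin word x has length P_X(x), and the interval algorithm
  has not stopped after m flips only if I_x straddles an endpoint of some target interval J_y.
  Discarding coin words with P_X(x) > 2^-(m l_X) and target words with P_Y(y) < 2^-(n l_Y), at
  most 2^(n l_Y) endpoints remain, each lying in one coin interval of mass at most 2^-(m l_X).
  This vanishes when m l_X > n l_Y, i.e. for R > sup_entropy Y / inf_entropy X. The same
  straddling bound shows that, when inf_entropy X > 0, the algorithm produces each y with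
  probability exactly P_Y(y). Under either hypothesis of the corollary the two bounds coincide.\<close>

section \<open>Words and consistent distributions\<close>

abbreviation words :: "nat \<Rightarrow> 'a list set" where
  "words n \<equiv> {xs. length xs = n}"

lemma finite_words: "finite (words n :: 'a::finite list set)"
  using finite_lists_length_eq[of "UNIV :: 'a set" n] by simp

lemma card_words: "card (words n :: 'a::finite list set) = CARD('a) ^ n"
  using card_lists_length_eq[of "UNIV :: 'a set" n] by simp

lemma finite_words_le: "finite {xs :: 'a::finite list. length xs \<le> n}"
  using finite_lists_length_le[of "UNIV :: 'a set" n] by simp

lemma sum_words_Suc:
  fixes f :: "'a::finite list \<Rightarrow> real"
  shows "(\<Sum>t\<in>words (Suc k). f t) = (\<Sum>a\<in>UNIV. \<Sum>t\<in>words k. f (a # t))"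
proof -
  have words_Suc: "words (Suc k) = (\<lambda>(a, t). a # t) ` (UNIV \<times> words k)"
    by (auto simp: length_Suc_conv image_iff)
  have "inj_on (\<lambda>(a, t). a # t) (UNIV \<times> words k)"
    by (auto simp: inj_on_def)
  then have "(\<Sum>t\<in>words (Suc k). f t) = (\<Sum>(a, t)\<in>UNIV \<times> words k. f (a # t))"
    unfolding words_Suc by (subst sum.reindex) (simp_all add: case_prod_beta)
  then show ?thesis
    by (simp add: sum.cartesian_product)
qed

lemma process_nonneg: "process p \<Longrightarrow> 0 \<le> p xs"
  unfolding process_def by blast

lemma process_Nil: "process p \<Longrightarrow> p [] = 1"
  unfolding process_def by blast

lemma process_sum_snoc: "process p \<Longrightarrow> (\<Sum>a\<in>UNIV. p (xs @ [a])) = p xs"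
  unfolding process_def by metis

lemma process_sum_extensions:
  assumes "process p"
  shows "(\<Sum>t\<in>words k. p (s @ t)) = p s"
proof (induction k arbitrary: s)
  case (Suc k)
  have "(\<Sum>t\<in>words (Suc k). p (s @ t)) = (\<Sum>a\<in>UNIV. \<Sum>t\<in>words k. p ((s @ [a]) @ t))"
    by (simp add: sum_words_Suc)
  also have "\<dots> = p s"
    by (simp only: Suc.IH process_sum_snoc[OF assms])
  finally show ?case .
qed simp

lemma process_sum_words:
  assumes "process p"
  shows "(\<Sum>xs\<in>words n. p xs) = 1"
  using process_sum_extensions[OF assms, where k=n and s="[]"] process_Nil[OF assms] by simp

lemma process_sum_prefix:
  assumes "process p" "length s \<le> n"
  shows "(\<Sum>xs\<in>{xs\<in>words n. prefix s xs}. p xs) = p s"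
proof -
  have "{xs\<in>words n. prefix s xs} = (\<lambda>t. s @ t) ` words (n - length s)"
    using assms(2) by (auto simp: prefix_def image_iff)
  then show ?thesis
    by (simp add: sum.reindex inj_on_def process_sum_extensions[OF assms(1)])
qed

lemma process_prefix_le:
  assumes "process p" "prefix s xs"
  shows "p xs \<le> p s"
proof -
  have "p xs \<le> (\<Sum>ys\<in>{ys\<in>words (length xs). prefix s ys}. p ys)"
    using assms by (intro member_le_sum) (auto simp: finite_words process_nonneg)
  also have "\<dots> = p s"
    using assms by (intro process_sum_prefix) (auto dest: prefix_length_le)
  finally show ?thesis .
qed

lemma process_le_1: "process p \<Longrightarrow> p xs \<le> 1"
  using process_prefix_le[of p "[]" xs] process_Nil[of p] by simp

lemma leaf_Some: "is_leaf \<phi> s \<Longrightarrow> \<phi> s = Some (the (\<phi> s))"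
  unfolding is_leaf_def by auto

lemma leaf_prefix_unique:
  "is_leaf \<phi> s \<Longrightarrow> is_leaf \<phi> s' \<Longrightarrow> prefix s xs \<Longrightarrow> prefix s' xs \<Longrightarrow> s = s'"
  unfolding is_leaf_def by (metis prefix_order.le_less prefix_same_cases)

definition leaves_within :: "('a list \<Rightarrow> 'b list option) \<Rightarrow> nat \<Rightarrow> ('b list \<Rightarrow> bool) \<Rightarrow> 'a list set" where
  "leaves_within \<phi> m P = {s. is_leaf \<phi> s \<and> length s \<le> m \<and> P (the (\<phi> s))}"

lemma finite_leaves_within: "finite (leaves_within \<phi> m P :: 'a::finite list set)"
  unfolding leaves_within_def by (rule finite_subset[OF _ finite_words_le]) auto

text \<open>Leaves are prefix-free, so every word of length m extends at most one of them.\<close>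
lemma sum_leaves_within:
  fixes p :: "'a::finite list \<Rightarrow> real"
  assumes "process p"
  shows "(\<Sum>s\<in>leaves_within \<phi> m P. p s)
       = prob_len p m (\<lambda>xs. \<exists>s. is_leaf \<phi> s \<and> P (the (\<phi> s)) \<and> prefix s xs)"
proof -
  define L where "L = leaves_within \<phi> m P"
  have "p s = (\<Sum>xs\<in>words m. if prefix s xs then p xs else 0)" if "s \<in> L" for s
    using process_sum_prefix[OF assms, of s m] that
      sum.inter_filter[OF finite_words, where P="prefix s" and g=p]
    by (simp add: L_def leaves_within_def)
  then have "(\<Sum>s\<in>L. p s) = (\<Sum>s\<in>L. \<Sum>xs\<in>words m. if prefix s xs then p xs else 0)"
    by (rule sum.cong[OF refl])
  also have "\<dots> = (\<Sum>xs\<in>words m. \<Sum>s\<in>L. if prefix s xs then p xs else 0)"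
    by (rule sum.swap)
  also have "\<dots> = (\<Sum>xs\<in>words m. if \<exists>s\<in>L. prefix s xs then p xs else 0)"
  proof (rule sum.cong[OF refl])
    fix xs
    show "(\<Sum>s\<in>L. if prefix s xs then p xs else 0) = (if \<exists>s\<in>L. prefix s xs then p xs else 0)"
    proof (cases "\<exists>s\<in>L. prefix s xs")
      case True
      then obtain s where "s \<in> L" "prefix s xs" by blast
      then have "{s\<in>L. prefix s xs} = {s}"
        using leaf_prefix_unique by (auto simp: L_def leaves_within_def)
      moreover have "finite L"
        unfolding L_def by (rule finite_leaves_within)
      ultimately show ?thesis
        using True sum.inter_filter[of L "\<lambda>_. p xs" "\<lambda>s. prefix s xs"] by simp
    qed auto
  qed
  also have "\<dots> = (\<Sum>xs\<in>words m. if \<exists>s. is_leaf \<phi> s \<and> P (the (\<phi> s)) \<and> prefix s xs then p xs else 0)"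
    by (intro sum.cong) (auto simp: L_def leaves_within_def dest: prefix_length_le)
  also have "\<dots> = (\<Sum>xs\<in>{xs\<in>words m. \<exists>s. is_leaf \<phi> s \<and> P (the (\<phi> s)) \<and> prefix s xs}. p xs)"
    by (rule sum.inter_filter[OF finite_words, symmetric])
  finally show ?thesis
    unfolding L_def prob_len_def by simp
qed

section \<open>The information spectrum\<close>

lemma info_rate_eq: "info_rate p n xs = - log 2 (p xs) / real n"
  unfolding info_rate_def by (simp add: log_inverse divide_inverse[of 1, simplified])

lemma info_rate_nonneg:
  assumes "process p"
  shows "0 \<le> info_rate p n xs"
proof -
  have "log 2 (p xs) \<le> 0"
    using process_nonneg[OF assms, of xs] process_le_1[OF assms, of xs]
    by (cases "p xs = 0") (auto simp: log_def divide_nonpos_pos)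
  then show ?thesis
    unfolding info_rate_eq by (simp add: divide_nonpos_nonneg)
qed

lemma le_info_rate_iff:
  assumes "0 < p xs" "0 < n"
  shows "l \<le> info_rate p n xs \<longleftrightarrow> p xs \<le> 2 powr (- (real n * l))"
proof -
  have "l \<le> info_rate p n xs \<longleftrightarrow> real n * l \<le> - log 2 (p xs)"
    unfolding info_rate_eq using assms(2) by (simp add: field_simps)
  also have "\<dots> \<longleftrightarrow> log 2 (p xs) \<le> - (real n * l)"
    by linarith
  also have "\<dots> \<longleftrightarrow> p xs \<le> 2 powr (- (real n * l))"
    using less_log_iff[of 2 "p xs" "- (real n * l)"] assms(1) by linarith
  finally show ?thesis .
qed

lemma info_rate_le_iff:
  assumes "0 < p xs" "0 < n"
  shows "info_rate p n xs \<le> l \<longleftrightarrow> 2 powr (- (real n * l)) \<le> p xs"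
proof -
  have "info_rate p n xs \<le> l \<longleftrightarrow> - log 2 (p xs) \<le> real n * l"
    unfolding info_rate_eq using assms(2) by (simp add: field_simps)
  also have "\<dots> \<longleftrightarrow> - (real n * l) \<le> log 2 (p xs)"
    by linarith
  also have "\<dots> \<longleftrightarrow> 2 powr (- (real n * l)) \<le> p xs"
    using le_log_iff[OF _ assms(1)] by simp
  finally show ?thesis .
qed

lemma prob_len_nonneg: "process p \<Longrightarrow> 0 \<le> prob_len p n Q"
  unfolding prob_len_def by (rule sum_nonneg) (simp add: process_nonneg)

lemma prob_len_compl:
  assumes "process p"
  shows "prob_len p n (\<lambda>xs. \<not> Q xs) = 1 - prob_len p n Q"
proof -
  have "prob_len p n Q + prob_len p n (\<lambda>xs. \<not> Q xs) = (\<Sum>xs\<in>words n. p xs)"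
    unfolding prob_len_def
    by (subst sum.union_disjoint[symmetric]) (auto intro: finite_subset[OF _ finite_words] intro!: sum.cong)
  then show ?thesis
    using process_sum_words[OF assms] by simp
qed

lemma prob_len_le_1: "process p \<Longrightarrow> prob_len p n Q \<le> 1"
  using prob_len_compl[of p n Q] prob_len_nonneg[of p n "\<lambda>xs. \<not> Q xs"] by linarith

lemma prob_len_eq_sum_if: "prob_len p n Q = (\<Sum>xs\<in>words n. if Q xs then p xs else 0)"
  unfolding prob_len_def using sum.inter_filter[OF finite_words, where P=Q and g=p] by simp

lemma prob_len_mono:
  assumes "process p" "\<And>xs. length xs = n \<Longrightarrow> Q xs \<Longrightarrow> 0 < p xs \<Longrightarrow> Q' xs"
  shows "prob_len p n Q \<le> prob_len p n Q'"
  unfolding prob_len_eq_sum_if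
  by (intro sum_mono) (use assms process_nonneg[OF assms(1)] in \<open>fastforce simp: less_le\<close>)

lemma prob_len_disj_le:
  assumes "process p"
  shows "prob_len p n (\<lambda>xs. Q xs \<or> Q' xs) \<le> prob_len p n Q + prob_len p n Q'"
  unfolding prob_len_eq_sum_if sum.distrib[symmetric]
  by (intro sum_mono) (use process_nonneg[OF assms] in auto)

lemma member_le_prob_len: "process p \<Longrightarrow> length xs = n \<Longrightarrow> Q xs \<Longrightarrow> p xs \<le> prob_len p n Q"
  unfolding prob_len_def
  by (rule member_le_sum) (auto intro: process_nonneg finite_subset[OF _ finite_words])

lemma prob_len_take:
  assumes "process p" "m \<le> n"
  shows "prob_len p n (\<lambda>xs. Q (take m xs)) = prob_len p m Q"
proof -
  define S where "S = {xs\<in>words n. Q (take m xs)}"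
  define T where "T = {ys\<in>words m. Q ys}"
  have "finite S" "finite T"
    unfolding S_def T_def by (auto intro: finite_subset[OF _ finite_words])
  then have "(\<Sum>xs\<in>S. p xs) = (\<Sum>ys\<in>T. \<Sum>xs\<in>{xs\<in>S. take m xs = ys}. p xs)"
    by (intro sum.group[symmetric]) (use assms(2) in \<open>auto simp: S_def T_def\<close>)
  also have "\<dots> = (\<Sum>ys\<in>T. \<Sum>xs\<in>{xs\<in>words n. prefix ys xs}. p xs)"
    by (intro sum.cong refl arg_cong[where f="sum p"])
       (auto simp: S_def T_def prefix_def, metis append_take_drop_id)
  also have "\<dots> = (\<Sum>ys\<in>T. p ys)"
    using process_sum_prefix[OF assms(1)] assms(2) by (auto simp: T_def)
  finally show ?thesis
    by (simp add: prob_len_def S_def T_def)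
qed

definition upper_tail_vanishes :: "('a::finite list \<Rightarrow> real) \<Rightarrow> real \<Rightarrow> bool" where
  "upper_tail_vanishes p l \<longleftrightarrow> (\<lambda>n. prob_len p n (\<lambda>xs. l \<le> info_rate p n xs)) \<longlonglongrightarrow> 0"

definition lower_tail_vanishes :: "('a::finite list \<Rightarrow> real) \<Rightarrow> real \<Rightarrow> bool" where
  "lower_tail_vanishes p l \<longleftrightarrow> (\<lambda>n. prob_len p n (\<lambda>xs. info_rate p n xs \<le> l)) \<longlonglongrightarrow> 0"

lemma sup_entropy_eq_Inf: "sup_entropy p = Inf {l. upper_tail_vanishes p l}"
  unfolding sup_entropy_def upper_tail_vanishes_def ..

lemma inf_entropy_eq_Sup: "inf_entropy p = Sup {l. lower_tail_vanishes p l}"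
  unfolding inf_entropy_def lower_tail_vanishes_def ..

lemma tendsto_zero_by_bound:
  fixes f g :: "nat \<Rightarrow> real"
  shows "(\<And>n. 0 \<le> f n) \<Longrightarrow> (\<And>n. f n \<le> g n) \<Longrightarrow> g \<longlonglongrightarrow> 0 \<Longrightarrow> f \<longlonglongrightarrow> 0"
  by (rule tendsto_sandwich[of "\<lambda>_. 0" f sequentially g 0]) auto

lemma upper_tail_vanishes_mono:
  "process p \<Longrightarrow> upper_tail_vanishes p l \<Longrightarrow> l \<le> l' \<Longrightarrow> upper_tail_vanishes p l'"
  unfolding upper_tail_vanishes_def
  by (auto intro!: tendsto_zero_by_bound[where g="\<lambda>n. prob_len p n (\<lambda>xs. l \<le> info_rate p n xs)"]
      prob_len_nonneg prob_len_mono)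

lemma lower_tail_vanishes_antimono:
  "process p \<Longrightarrow> lower_tail_vanishes p l \<Longrightarrow> l' \<le> l \<Longrightarrow> lower_tail_vanishes p l'"
  unfolding lower_tail_vanishes_def
  by (auto intro!: tendsto_zero_by_bound[where g="\<lambda>n. prob_len p n (\<lambda>xs. info_rate p n xs \<le> l)"]
      prob_len_nonneg prob_len_mono)

lemma upper_tail_vanishes_pos:
  assumes "process p" "upper_tail_vanishes p l"
  shows "0 < l"
proof (rule ccontr)
  assume "\<not> 0 < l"
  then have "prob_len p n (\<lambda>xs. l \<le> info_rate p n xs) = 1" for n
    using info_rate_nonneg[OF assms(1)] process_sum_words[OF assms(1)]
    by (simp add: prob_len_def order_trans[of l 0])
  then show False
    using assms(2) by (simp add: upper_tail_vanishes_def LIMSEQ_const_iff)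
qed

lemma lower_tail_vanishes_neg:
  assumes "process p" "l < 0"
  shows "lower_tail_vanishes p l"
proof -
  have "\<not> info_rate p n xs \<le> l" for n xs
    using info_rate_nonneg[OF assms(1), of n xs] assms(2) by linarith
  then show ?thesis
    by (simp add: lower_tail_vanishes_def prob_len_def)
qed

text \<open>There are CARD('a)^n words of length n, so those of probability at most
  (2 CARD('a))^-n have total mass at most 2^-n.\<close>
lemma upper_tail_vanishes_log_card:
  fixes p :: "'a::finite list \<Rightarrow> real"
  assumes "process p"
  shows "upper_tail_vanishes p (log 2 (2 * real CARD('a)))"
proof -
  define c where "c = real CARD('a)"
  define l where "l = log 2 (2 * c)"
  have c: "1 \<le> c" unfolding c_def by simp
  have small: "p xs \<le> inverse ((2 * c) ^ n)" if "0 < n" "l \<le> info_rate p n xs" for n xs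
  proof (cases "p xs = 0")
    case False
    then have "0 < p xs" using process_nonneg[OF assms, of xs] by simp
    moreover have "2 powr (real n * l) = (2 powr l) powr real n"
      by (simp add: powr_powr mult.commute)
    then have "2 powr (real n * l) = (2 * c) ^ n"
      using c by (simp add: l_def powr_realpow)
    ultimately show ?thesis
      using that le_info_rate_iff[of p xs n l] by (simp add: powr_minus)
  qed (use c in simp)
  have "prob_len p n (\<lambda>xs. l \<le> info_rate p n xs) \<le> (1/2) ^ n" for n
  proof (cases "n = 0")
    case False
    have "prob_len p n (\<lambda>xs. l \<le> info_rate p n xs)
        \<le> (\<Sum>xs\<in>{xs. length xs = n \<and> l \<le> info_rate p n xs}. inverse ((2 * c) ^ n))"
      unfolding prob_len_def by (rule sum_mono) (use small False in auto)
    also have "\<dots> \<le> (\<Sum>xs\<in>(words n :: 'a list set). inverse ((2 * c) ^ n))"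
      by (rule sum_mono2) (use c in \<open>auto simp: finite_words\<close>)
    also have "\<dots> = (1/2) ^ n"
      using c by (simp add: card_words c_def[symmetric] power_mult_distrib field_simps)
    finally show ?thesis .
  qed (simp add: prob_len_le_1[OF assms])
  moreover have "(\<lambda>n. (1/2 :: real) ^ n) \<longlonglongrightarrow> 0"
    by (rule LIMSEQ_realpow_zero) auto
  ultimately show ?thesis
    unfolding upper_tail_vanishes_def l_def c_def
    by (rule tendsto_zero_by_bound[OF prob_len_nonneg[OF assms]])
qed

lemma lower_tail_lt_upper_tail:
  assumes "process p" "lower_tail_vanishes p l" "upper_tail_vanishes p l'"
  shows "l < l'"
proof (rule ccontr)
  assume "\<not> l < l'"
  then have le: "prob_len p n (\<lambda>xs. \<not> info_rate p n xs \<le> l) \<le> prob_len p n (\<lambda>xs. l' \<le> info_rate p n xs)" for n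
    by (intro prob_len_mono[OF assms(1)]) auto
  have "1 \<le> prob_len p n (\<lambda>xs. info_rate p n xs \<le> l) + prob_len p n (\<lambda>xs. l' \<le> info_rate p n xs)" for n
    using le[of n] prob_len_compl[OF assms(1), of n "\<lambda>xs. info_rate p n xs \<le> l"] by linarith
  moreover have "(\<lambda>n. prob_len p n (\<lambda>xs. info_rate p n xs \<le> l)
      + prob_len p n (\<lambda>xs. l' \<le> info_rate p n xs)) \<longlonglongrightarrow> 0"
    using tendsto_add[OF assms(2,3)[unfolded lower_tail_vanishes_def upper_tail_vanishes_def]] by simp
  ultimately show False
    using LIMSEQ_le_const[of _ 0 1] by (metis (lifting) zero_less_one not_less)
qed

lemma bdd_below_upper_tail: "process p \<Longrightarrow> bdd_below {l. upper_tail_vanishes p l}"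
  by (rule bdd_belowI[of _ 0]) (auto dest: upper_tail_vanishes_pos)

lemma bdd_above_lower_tail:
  fixes p :: "'a::finite list \<Rightarrow> real"
  assumes "process p"
  shows "bdd_above {l. lower_tail_vanishes p l}"
  by (rule bdd_aboveI[of _ "log 2 (2 * real CARD('a))"])
     (use lower_tail_lt_upper_tail[OF assms _ upper_tail_vanishes_log_card[OF assms]] in \<open>auto intro: less_imp_le\<close>)

lemma sup_entropy_le: "process p \<Longrightarrow> upper_tail_vanishes p l \<Longrightarrow> sup_entropy p \<le> l"
  unfolding sup_entropy_eq_Inf by (rule cInf_lower[OF _ bdd_below_upper_tail]) simp_all

lemma le_inf_entropy: "process p \<Longrightarrow> lower_tail_vanishes p l \<Longrightarrow> l \<le> inf_entropy p"
  unfolding inf_entropy_eq_Sup by (rule cSup_upper[OF _ bdd_above_lower_tail]) simp_all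

lemma upper_tail_vanishes_above:
  assumes "process p" "sup_entropy p < l"
  shows "upper_tail_vanishes p l"
proof -
  have "{l. upper_tail_vanishes p l} \<noteq> {}"
    using upper_tail_vanishes_log_card[OF assms(1)] by blast
  then obtain l' where "upper_tail_vanishes p l'" "l' < l"
    using cInf_lessD[of "{l. upper_tail_vanishes p l}" l] assms(2)
    unfolding sup_entropy_eq_Inf by auto
  then show ?thesis
    using upper_tail_vanishes_mono[OF assms(1)] by auto
qed

lemma lower_tail_vanishes_below:
  assumes "process p" "l < inf_entropy p"
  shows "lower_tail_vanishes p l"
proof -
  have "{l. lower_tail_vanishes p l} \<noteq> {}"
    using lower_tail_vanishes_neg[OF assms(1), of "-1"] by auto
  then obtain l' where "lower_tail_vanishes p l'" "l < l'"
    using less_cSupD[of "{l. lower_tail_vanishes p l}" l] assms(2)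
    unfolding inf_entropy_eq_Sup by auto
  then show ?thesis
    using lower_tail_vanishes_antimono[OF assms(1)] by auto
qed

lemma sup_entropy_nonneg:
  assumes "process p"
  shows "0 \<le> sup_entropy p"
  unfolding sup_entropy_eq_Inf
  by (rule cInf_greatest) (use upper_tail_vanishes_log_card[OF assms] upper_tail_vanishes_pos[OF assms] in
      \<open>auto intro: less_imp_le\<close>)

lemma inf_entropy_nonneg:
  assumes "process p"
  shows "0 \<le> inf_entropy p"
proof (rule ccontr)
  assume "\<not> 0 \<le> inf_entropy p"
  then show False
    using le_inf_entropy[OF assms lower_tail_vanishes_neg[OF assms, of "inf_entropy p / 2"]] by simp
qed


section \<open>Stopping times\<close>

lemma stop_exceeds_real:
  "stop_exceeds p \<phi> (real m) = 1 - (\<Sum>s\<in>leaves_within \<phi> m (\<lambda>_. True). p s)"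
  unfolding stop_exceeds_def leaves_within_def by simp

lemma stop_exceeds_nat_floor:
  assumes "0 \<le> t"
  shows "stop_exceeds p \<phi> (real (nat \<lfloor>t\<rfloor>)) = stop_exceeds p \<phi> t"
proof -
  have "real k \<le> real (nat \<lfloor>t\<rfloor>) \<longleftrightarrow> real k \<le> t" for k
    using assms by (simp only: of_nat_le_iff) (simp add: le_nat_iff le_floor_iff)
  then show ?thesis
    unfolding stop_exceeds_def by simp
qed

lemma stop_exceeds_eq_prob_len:
  assumes "process p"
  shows "stop_exceeds p \<phi> (real m) = prob_len p m (\<lambda>xs. \<not> (\<exists>s. is_leaf \<phi> s \<and> prefix s xs))"
  using prob_len_compl[OF assms, of m "\<lambda>xs. \<exists>s. is_leaf \<phi> s \<and> prefix s xs"]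
  unfolding stop_exceeds_real sum_leaves_within[OF assms] by simp

lemma stop_exceeds_nonneg:
  assumes "process p"
  shows "0 \<le> stop_exceeds p \<phi> t"
proof (cases "t < 0")
  case True
  then show ?thesis
    unfolding stop_exceeds_def by (simp add: not_le[symmetric])
next
  case False
  then have "stop_exceeds p \<phi> t = stop_exceeds p \<phi> (real (nat \<lfloor>t\<rfloor>))"
    by (simp only: stop_exceeds_nat_floor not_less)
  then show ?thesis
    unfolding stop_exceeds_eq_prob_len[OF assms] by (simp add: prob_len_nonneg[OF assms])
qed

lemma stop_exceeds_antimono:
  assumes "process p" "t \<le> t'"
  shows "stop_exceeds p \<phi> t' \<le> stop_exceeds p \<phi> t"
proof -
  have "{s. is_leaf \<phi> s \<and> real (length s) \<le> t'} \<subseteq> {s. length s \<le> nat \<lfloor>t'\<rfloor>}"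
    by (auto simp: le_nat_iff le_floor_iff)
  then have "finite {s. is_leaf \<phi> s \<and> real (length s) \<le> t'}"
    using finite_subset finite_words_le by blast
  then have "(\<Sum>s\<in>{s. is_leaf \<phi> s \<and> real (length s) \<le> t}. p s)
      \<le> (\<Sum>s\<in>{s. is_leaf \<phi> s \<and> real (length s) \<le> t'}. p s)"
    by (rule sum_mono2) (use assms in \<open>auto simp: process_nonneg\<close>)
  then show ?thesis
    unfolding stop_exceeds_def by simp
qed

lemma achievable_by_mono:
  assumes "process p" "achievable_by p \<Phi> R" "R \<le> R'"
  shows "achievable_by p \<Phi> R'"
proof -
  have "stop_exceeds p (\<Phi> n) (real n * R') \<le> stop_exceeds p (\<Phi> n) (real n * R)" for n
    using assms(3) by (intro stop_exceeds_antimono[OF assms(1)] mult_left_mono) simp_all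
  then show ?thesis
    using assms(2) unfolding achievable_by_def
    by (intro tendsto_zero_by_bound[OF stop_exceeds_nonneg[OF assms(1)]])
qed

lemma achievable_by_nonneg:
  assumes "achievable_by p \<Phi> R"
  shows "0 \<le> R"
proof (rule ccontr)
  assume "\<not> 0 \<le> R"
  then have "real (Suc n) * R < 0" for n
    by (simp add: mult_pos_neg)
  then have "stop_exceeds p (\<Phi> (Suc n)) (real (Suc n) * R) = 1" for n
    unfolding stop_exceeds_def by (smt (verit, best) Collect_empty_eq of_nat_0_le_iff sum.empty)
  moreover have "(\<lambda>n. stop_exceeds p (\<Phi> (Suc n)) (real (Suc n) * R)) \<longlonglongrightarrow> 0"
    using LIMSEQ_Suc[OF assms[unfolded achievable_by_def]] .
  ultimately show False
    by (simp add: LIMSEQ_const_iff)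
qed

lemma filterlim_nat_floor_mult:
  assumes "0 < R"
  shows "filterlim (\<lambda>n. nat \<lfloor>real n * R\<rfloor>) at_top sequentially"
proof -
  have "filterlim (\<lambda>n. real n * R) at_top sequentially"
    using assms by (intro filterlim_at_top_mult_tendsto_pos[OF tendsto_const assms filterlim_real_sequentially])
  then show ?thesis
    by (intro filterlim_compose[OF filterlim_nat_sequentially] filterlim_compose[OF filterlim_floor_sequentially])
qed

lemma nat_floor_bounds:
  assumes "0 \<le> t"
  shows "real (nat \<lfloor>t\<rfloor>) \<le> t" "t - 1 < real (nat \<lfloor>t\<rfloor>)"
  using assms by linarith+


section \<open>The converse bounds\<close>

lemma generates_length: "generates pX pY n \<phi> \<Longrightarrow> \<phi> s = Some y \<Longrightarrow> length y = n"
  unfolding generates_def by blast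

lemma has_sum_nonneg_finite_le:
  fixes f :: "'a \<Rightarrow> real"
  assumes "(f has_sum S) A" "finite F" "F \<subseteq> A" "\<And>x. x \<in> A \<Longrightarrow> 0 \<le> f x"
  shows "sum f F \<le> S"
  by (rule has_sum_mono2[OF has_sum_finite[OF assms(2)] assms(1) assms(3)]) (use assms(4) in auto)

lemma generates_sum_leaves_single_le:
  assumes "generates pX pY n \<phi>" "process pX" "length y = n"
  shows "(\<Sum>s\<in>leaves_within \<phi> m (\<lambda>z. z = y). pX s) \<le> pY y"
proof -
  have "(pX has_sum pY y) {s. is_leaf \<phi> s \<and> \<phi> s = Some y}"
    using assms(1,3) unfolding generates_def by blast
  then show ?thesis
    by (rule has_sum_nonneg_finite_le[OF _ finite_leaves_within])
       (use leaf_Some process_nonneg[OF assms(2)] in \<open>auto simp: leaves_within_def\<close>)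
qed

lemma generates_leaf_le:
  assumes "generates pX pY n \<phi>" "process pX" "is_leaf \<phi> s" "\<phi> s = Some y"
  shows "pX s \<le> pY y"
proof -
  have "s \<in> leaves_within \<phi> (length s) (\<lambda>z. z = y)"
    using assms(3,4) by (simp add: leaves_within_def)
  then have "pX s \<le> (\<Sum>s\<in>leaves_within \<phi> (length s) (\<lambda>z. z = y). pX s)"
    by (intro member_le_sum finite_leaves_within process_nonneg[OF assms(2)])
  also have "\<dots> \<le> pY y"
    using assms by (intro generates_sum_leaves_single_le generates_length)
  finally show ?thesis .
qed

lemma sum_leaves_within_group:
  fixes pX :: "'a::finite list \<Rightarrow> real"
  assumes "finite B"
  shows "(\<Sum>y\<in>B. \<Sum>s\<in>leaves_within \<phi> m (\<lambda>z. z = y). pX s) = (\<Sum>s\<in>leaves_within \<phi> m (\<lambda>z. z \<in> B). pX s)"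
proof -
  have "(\<Sum>y\<in>B. \<Sum>s\<in>{s \<in> leaves_within \<phi> m (\<lambda>z. z \<in> B). the (\<phi> s) = y}. pX s)
      = (\<Sum>s\<in>leaves_within \<phi> m (\<lambda>z. z \<in> B). pX s)"
    by (rule sum.group[OF finite_leaves_within assms]) (auto simp: leaves_within_def)
  moreover have "{s \<in> leaves_within \<phi> m (\<lambda>z. z \<in> B). the (\<phi> s) = y} = leaves_within \<phi> m (\<lambda>z. z = y)"
    if "y \<in> B" for y
    using that by (auto simp: leaves_within_def)
  ultimately show ?thesis
    by simp
qed

lemma generates_sum_leaves_le:
  assumes "generates pX pY n \<phi>" "process pX" "B \<subseteq> words n"
  shows "(\<Sum>s\<in>leaves_within \<phi> m (\<lambda>z. z \<in> B). pX s) \<le> (\<Sum>y\<in>B. pY y)"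
proof -
  have "finite B"
    using assms(3) finite_subset finite_words by blast
  then show ?thesis
    unfolding sum_leaves_within_group[OF \<open>finite B\<close>, symmetric]
    by (intro sum_mono generates_sum_leaves_single_le[OF assms(1,2)]) (use assms(3) in auto)
qed

lemma generates_sum_le_leaves:
  assumes "generates pX pY n \<phi>" "process pX" "process pY" "B \<subseteq> words n"
  shows "(\<Sum>y\<in>B. pY y) \<le> (\<Sum>s\<in>leaves_within \<phi> m (\<lambda>z. z \<in> B). pX s) + stop_exceeds pX \<phi> (real m)"
proof -
  define G where "G y = (\<Sum>s\<in>leaves_within \<phi> m (\<lambda>z. z = y). pX s)" for y
  have "finite B"
    using assms(4) finite_subset finite_words by blast
  have "leaves_within \<phi> m (\<lambda>z. z \<in> words n) = leaves_within \<phi> m (\<lambda>_. True)"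
    using generates_length[OF assms(1) leaf_Some] by (auto simp: leaves_within_def)
  then have total: "(\<Sum>y\<in>words n. G y) = 1 - stop_exceeds pX \<phi> (real m)"
    unfolding G_def stop_exceeds_real by (simp add: sum_leaves_within_group[OF finite_words])
  have "(\<Sum>y\<in>B. pY y - G y) \<le> (\<Sum>y\<in>words n. pY y - G y)"
    by (rule sum_mono2[OF finite_words assms(4)])
       (auto simp: G_def intro: generates_sum_leaves_single_le[OF assms(1,2)])
  also have "\<dots> = 1 - (\<Sum>y\<in>words n. G y)"
    by (simp add: sum_subtractf process_sum_words[OF assms(3)])
  finally show ?thesis
    using total sum_leaves_within_group[OF \<open>finite B\<close>, where \<phi>=\<phi> and m=m and pX=pX]
    by (simp add: G_def sum_subtractf)
qed

text \<open>Key inequality of the converse: a leaf producing y has probability at most P_Y(y), so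
  an atypically unlikely output y forces an atypically unlikely coin prefix.\<close>
lemma generates_upper_tail_le:
  assumes gen: "generates pX pY n \<phi>" and pX: "process pX" and pY: "process pY"
    and "0 < n" "0 < m" and rates: "real m * lX \<le> real n * lY"
  shows "prob_len pY n (\<lambda>y. lY \<le> info_rate pY n y)
     \<le> prob_len pX m (\<lambda>x. lX \<le> info_rate pX m x) + stop_exceeds pX \<phi> (real m)"
proof -
  define B where "B = {y\<in>words n. lY \<le> info_rate pY n y}"
  have B: "B \<subseteq> words n"
    by (auto simp: B_def)
  have "(\<Sum>s\<in>leaves_within \<phi> m (\<lambda>z. z \<in> B). pX s)
      = prob_len pX m (\<lambda>x. \<exists>s. is_leaf \<phi> s \<and> the (\<phi> s) \<in> B \<and> prefix s x)"
    by (rule sum_leaves_within[OF pX])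
  also have "\<dots> \<le> prob_len pX m (\<lambda>x. lX \<le> info_rate pX m x)"
  proof (rule prob_len_mono[OF pX])
    fix x assume "\<exists>s. is_leaf \<phi> s \<and> the (\<phi> s) \<in> B \<and> prefix s x" "0 < pX x"
    then obtain s where s: "is_leaf \<phi> s" "the (\<phi> s) \<in> B" "prefix s x" by blast
    have "pX x \<le> pY (the (\<phi> s))"
      using process_prefix_le[OF pX s(3)] generates_leaf_le[OF gen pX s(1) leaf_Some[OF s(1)]] by linarith
    moreover have "pY (the (\<phi> s)) \<le> 2 powr (- (real n * lY))"
      if "0 < pY (the (\<phi> s))"
      using s(2) le_info_rate_iff[of pY "the (\<phi> s)" n lY] that \<open>0 < n\<close> by (simp add: B_def)
    moreover have "2 powr (- (real n * lY)) \<le> 2 powr (- (real m * lX))"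
      using rates by simp
    ultimately have "pX x \<le> 2 powr (- (real m * lX))"
      using \<open>0 < pX x\<close> by linarith
    then show "lX \<le> info_rate pX m x"
      using le_info_rate_iff[of pX x m lX] \<open>0 < pX x\<close> \<open>0 < m\<close> by simp
  qed
  finally show ?thesis
    using generates_sum_le_leaves[OF gen pX pY B, of m] by (simp add: prob_len_def B_def)
qed

lemma generates_lower_tail_le:
  assumes gen: "generates pX pY n \<phi>" and pX: "process pX" and pY: "process pY"
    and "0 < n" "0 < m" and rates: "real m * lX \<le> real n * lY"
  shows "prob_len pX m (\<lambda>x. info_rate pX m x \<le> lX)
     \<le> stop_exceeds pX \<phi> (real m) + prob_len pY n (\<lambda>y. info_rate pY n y \<le> lY)"
proof -
  define B where "B = {y\<in>words n. info_rate pY n y \<le> lY}"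
  have B: "B \<subseteq> words n"
    by (auto simp: B_def)
  define stopped where "stopped x \<longleftrightarrow> (\<exists>s. is_leaf \<phi> s \<and> prefix s x)" for x
  define hits_B where "hits_B x \<longleftrightarrow> (\<exists>s. is_leaf \<phi> s \<and> the (\<phi> s) \<in> B \<and> prefix s x)" for x
  have "prob_len pX m (\<lambda>x. info_rate pX m x \<le> lX) \<le> prob_len pX m (\<lambda>x. \<not> stopped x \<or> hits_B x)"
  proof (rule prob_len_mono[OF pX])
    fix x assume x: "info_rate pX m x \<le> lX" "0 < pX x"
    show "\<not> stopped x \<or> hits_B x"
    proof (cases "stopped x")
      case True
      then obtain s where s: "is_leaf \<phi> s" "prefix s x" unfolding stopped_def by blast
      define y where "y = the (\<phi> s)"
      have y: "\<phi> s = Some y" using leaf_Some[OF s(1)] unfolding y_def .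
      have "2 powr (- (real n * lY)) \<le> 2 powr (- (real m * lX))"
        using rates by simp
      also have "\<dots> \<le> pX x"
        using x info_rate_le_iff[of pX x m lX] \<open>0 < pX x\<close> \<open>0 < m\<close> by simp
      also have "\<dots> \<le> pY y"
        using process_prefix_le[OF pX s(2)] generates_leaf_le[OF gen pX s(1) y] by linarith
      finally have y_large: "2 powr (- (real n * lY)) \<le> pY y" .
      then have "0 < pY y"
        by (rule less_le_trans[rotated]) simp
      then have "info_rate pY n y \<le> lY"
        using info_rate_le_iff[of pY y n lY] y_large \<open>0 < n\<close> by simp
      then show ?thesis
        using s generates_length[OF gen y] by (auto simp: hits_B_def B_def y_def)
    qed simp
  qed
  also have "\<dots> \<le> prob_len pX m (\<lambda>x. \<not> stopped x) + prob_len pX m hits_B"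
    by (rule prob_len_disj_le[OF pX])
  also have "prob_len pX m hits_B \<le> (\<Sum>y\<in>B. pY y)"
    using sum_leaves_within[OF pX, of \<phi> m "\<lambda>z. z \<in> B"] generates_sum_leaves_le[OF gen pX B, of m]
    by (simp add: hits_B_def[abs_def] B_def)
  finally show ?thesis
    using stop_exceeds_eq_prob_len[OF pX, of \<phi> m] by (simp add: stopped_def prob_len_def B_def)
qed


lemma achievable_upper_tail_vanishes:
  assumes pX: "process pX" and pY: "process pY" and gen: "\<And>n. generates pX pY n (\<Phi> n)"
    and ach: "achievable_by pX \<Phi> R" and "0 < R"
    and tail: "upper_tail_vanishes pX lX" and rates: "R * lX \<le> lY"
  shows "upper_tail_vanishes pY lY"
proof -
  define m where "m n = nat \<lfloor>real n * R\<rfloor>" for n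
  have m: "filterlim m at_top sequentially"
    unfolding m_def by (rule filterlim_nat_floor_mult[OF \<open>0 < R\<close>])
  have "0 < lX"
    by (rule upper_tail_vanishes_pos[OF pX tail])
  have bound: "\<forall>\<^sub>F n in sequentially. prob_len pY n (\<lambda>y. lY \<le> info_rate pY n y)
      \<le> prob_len pX (m n) (\<lambda>x. lX \<le> info_rate pX (m n) x) + stop_exceeds pX (\<Phi> n) (real n * R)"
    using eventually_gt_at_top[of 0] m[unfolded filterlim_at_top, rule_format, of 1]
  proof eventually_elim
    case (elim n)
    have "real (m n) \<le> real n * R"
      unfolding m_def by (rule nat_floor_bounds(1)) (use \<open>0 < R\<close> in simp)
    then have "real (m n) * lX \<le> real n * R * lX"
      using \<open>0 < lX\<close> by (simp add: mult_right_mono)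
    also have "\<dots> \<le> real n * lY"
      using rates by (simp add: mult.assoc mult_left_mono)
    finally have "real (m n) * lX \<le> real n * lY" .
    moreover have "stop_exceeds pX (\<Phi> n) (real (m n)) = stop_exceeds pX (\<Phi> n) (real n * R)"
      unfolding m_def by (rule stop_exceeds_nat_floor) (use \<open>0 < R\<close> in simp)
    ultimately show ?case
      using generates_upper_tail_le[OF gen pX pY, of n "m n" lX lY] elim by simp
  qed
  have "(\<lambda>n. prob_len pX (m n) (\<lambda>x. lX \<le> info_rate pX (m n) x)
      + stop_exceeds pX (\<Phi> n) (real n * R)) \<longlonglongrightarrow> 0 + 0"
    using filterlim_compose[OF tail[unfolded upper_tail_vanishes_def] m] ach
    unfolding achievable_by_def by (rule tendsto_add)
  then show ?thesis
    unfolding upper_tail_vanishes_def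
    using tendsto_sandwich[OF always_eventually[OF allI[OF prob_len_nonneg[OF pY]]] bound tendsto_const]
    by simp
qed

lemma lower_tail_vanishes_along_floor_mult:
  assumes pX: "process pX" and pY: "process pY" and gen: "\<And>n. generates pX pY n (\<Phi> n)"
    and ach: "achievable_by pX \<Phi> R" and "0 < R"
    and tail: "lower_tail_vanishes pY lY" and rates: "R * lX \<le> lY" and "0 < lX"
  shows "(\<lambda>n. prob_len pX (nat \<lfloor>real n * R\<rfloor>) (\<lambda>x. info_rate pX (nat \<lfloor>real n * R\<rfloor>) x \<le> lX)) \<longlonglongrightarrow> 0"
proof -
  define m where "m n = nat \<lfloor>real n * R\<rfloor>" for n
  have m: "filterlim m at_top sequentially"
    unfolding m_def by (rule filterlim_nat_floor_mult[OF \<open>0 < R\<close>])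
  have bound: "\<forall>\<^sub>F n in sequentially. prob_len pX (m n) (\<lambda>x. info_rate pX (m n) x \<le> lX)
      \<le> stop_exceeds pX (\<Phi> n) (real n * R) + prob_len pY n (\<lambda>y. info_rate pY n y \<le> lY)"
    using eventually_gt_at_top[of 0] m[unfolded filterlim_at_top, rule_format, of 1]
  proof eventually_elim
    case (elim n)
    have "real (m n) \<le> real n * R"
      unfolding m_def by (rule nat_floor_bounds(1)) (use \<open>0 < R\<close> in simp)
    then have "real (m n) * lX \<le> real n * R * lX"
      using \<open>0 < lX\<close> by (simp add: mult_right_mono)
    also have "\<dots> \<le> real n * lY"
      using rates by (simp add: mult.assoc mult_left_mono)
    finally have "real (m n) * lX \<le> real n * lY" .
    moreover have "stop_exceeds pX (\<Phi> n) (real (m n)) = stop_exceeds pX (\<Phi> n) (real n * R)"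
      unfolding m_def by (rule stop_exceeds_nat_floor) (use \<open>0 < R\<close> in simp)
    ultimately show ?case
      using generates_lower_tail_le[OF gen pX pY, of n "m n" lX lY] elim by simp
  qed
  have "(\<lambda>n. stop_exceeds pX (\<Phi> n) (real n * R)
      + prob_len pY n (\<lambda>y. info_rate pY n y \<le> lY)) \<longlonglongrightarrow> 0 + 0"
    using ach tail unfolding achievable_by_def lower_tail_vanishes_def by (rule tendsto_add)
  then show ?thesis
    unfolding m_def[symmetric]
    using tendsto_sandwich[OF always_eventually[OF allI[OF prob_len_nonneg[OF pX]]] bound tendsto_const]
    by simp
qed

lemma lower_tail_le_shorter:
  assumes p: "process p" and "0 < m" "m \<le> k" and rates: "real k * l \<le> real m * l'"
  shows "prob_len p k (\<lambda>x. info_rate p k x \<le> l) \<le> prob_len p m (\<lambda>x. info_rate p m x \<le> l')"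
proof -
  have "prob_len p k (\<lambda>x. info_rate p k x \<le> l) \<le> prob_len p k (\<lambda>x. info_rate p m (take m x) \<le> l')"
  proof (rule prob_len_mono[OF p])
    fix x assume x: "length x = k" "info_rate p k x \<le> l" "0 < p x"
    have prefix: "p x \<le> p (take m x)"
      by (rule process_prefix_le[OF p take_is_prefix])
    have "2 powr (- (real m * l')) \<le> 2 powr (- (real k * l))"
      using rates by simp
    also have "\<dots> \<le> p x"
      using x \<open>0 < m\<close> \<open>m \<le> k\<close> info_rate_le_iff[of p x k l] by simp
    also have "\<dots> \<le> p (take m x)"
      by (rule prefix)
    finally show "info_rate p m (take m x) \<le> l'"
      using info_rate_le_iff[of p "take m x" m l'] prefix \<open>0 < m\<close> \<open>0 < p x\<close> by simp
  qed
  also have "\<dots> = prob_len p m (\<lambda>x. info_rate p m x \<le> l')"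
    by (rule prob_len_take[OF p \<open>m \<le> k\<close>])
  finally show ?thesis .
qed

lemma nat_floor_round_trip:
  fixes R :: real and k :: nat
  assumes "0 < R"
  defines "m \<equiv> nat \<lfloor>real (nat \<lfloor>real k * inverse R\<rfloor>) * R\<rfloor>"
  shows "m \<le> k" "real k - R - 1 < real m"
proof -
  define n where "n = nat \<lfloor>real k * inverse R\<rfloor>"
  have n: "real n \<le> real k * inverse R" "real k * inverse R - 1 < real n"
    unfolding n_def using assms(1) by (intro nat_floor_bounds; simp)+
  have m: "real m \<le> real n * R" "real n * R - 1 < real m"
    unfolding m_def n_def[symmetric] using assms(1) by (intro nat_floor_bounds; simp)+
  have "real n * R \<le> real k"
    using n(1) assms(1) by (simp add: field_simps)
  then show "m \<le> k"
    using m(1) by linarith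
  have "(real k * inverse R - 1) * R \<le> real n * R"
    using n(2) assms(1) by (intro mult_right_mono) auto
  moreover have "(real k * inverse R - 1) * R = real k - R"
    using assms(1) by (simp add: field_simps)
  ultimately show "real k - R - 1 < real m"
    using m(2) by linarith
qed

text \<open>Every large length k exceeds some length of the form nat \<lfloor>n R\<rfloor> by at most R + 1, and a
  prefix is at least as likely as the whole word.\<close>
lemma lower_tail_vanishes_of_floor_mult:
  assumes p: "process p" and "0 < R"
    and along: "(\<lambda>n. prob_len p (nat \<lfloor>real n * R\<rfloor>) (\<lambda>x. info_rate p (nat \<lfloor>real n * R\<rfloor>) x \<le> l')) \<longlonglongrightarrow> 0"
    and "0 < l" "l < l'"
  shows "lower_tail_vanishes p l"
proof -
  define g where "g n = prob_len p (nat \<lfloor>real n * R\<rfloor>) (\<lambda>x. info_rate p (nat \<lfloor>real n * R\<rfloor>) x \<le> l')" for n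
  define mm where "mm k = nat \<lfloor>real (nat \<lfloor>real k * inverse R\<rfloor>) * R\<rfloor>" for k
  have "filterlim (\<lambda>k. nat \<lfloor>real k * inverse R\<rfloor>) at_top sequentially"
    using \<open>0 < R\<close> by (intro filterlim_nat_floor_mult) simp
  from filterlim_compose[OF along[folded g_def] this]
  have lim: "(\<lambda>k. g (nat \<lfloor>real k * inverse R\<rfloor>)) \<longlonglongrightarrow> 0" .
  obtain N :: nat where N: "(R + 1) * l' / (l' - l) < real N"
    using reals_Archimedean2 by blast
  have "prob_len p k (\<lambda>x. info_rate p k x \<le> l) \<le> g (nat \<lfloor>real k * inverse R\<rfloor>)" if "N \<le> k" for k
  proof -
    have "(R + 1) * l' / (l' - l) < real k"
      using N that by (meson less_le_trans of_nat_mono)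
    then have large: "(R + 1) * l' < real k * (l' - l)"
      using \<open>l < l'\<close> by (simp add: pos_divide_less_eq)
    have "0 < (R + 1) * l'"
      using \<open>0 < R\<close> \<open>0 < l\<close> \<open>l < l'\<close> by simp
    then have "0 < real k * (l' - l)"
      using large by linarith
    then have "0 < real k"
      using \<open>l < l'\<close> by (simp add: zero_less_mult_iff)
    have "(real k - R - 1) * l' \<le> real (mm k) * l'"
      using nat_floor_round_trip(2)[OF \<open>0 < R\<close>, of k] \<open>l < l'\<close> \<open>0 < l\<close>
      by (intro mult_right_mono) (auto simp: mm_def)
    then have rates: "real k * l \<le> real (mm k) * l'"
      using large by (simp add: algebra_simps)
    moreover have "0 < real k * l"
      using \<open>0 < real k\<close> \<open>0 < l\<close> by simp
    ultimately have "0 < real (mm k) * l'"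
      by linarith
    then have "0 < mm k"
      using \<open>0 < l\<close> \<open>l < l'\<close> by (simp add: zero_less_mult_iff)
    then show ?thesis
      using lower_tail_le_shorter[OF p _ _ rates] nat_floor_round_trip(1)[OF \<open>0 < R\<close>, of k]
      by (simp add: g_def mm_def)
  qed
  then have "\<forall>\<^sub>F k in sequentially. prob_len p k (\<lambda>x. info_rate p k x \<le> l) \<le> g (nat \<lfloor>real k * inverse R\<rfloor>)"
    unfolding eventually_sequentially by blast
  from tendsto_sandwich[OF always_eventually[OF allI[OF prob_len_nonneg[OF p]]] this tendsto_const lim]
  show ?thesis
    unfolding lower_tail_vanishes_def .
qed

lemma le_of_forall_gt_continuous:
  fixes f :: "real \<Rightarrow> real"
  assumes "\<And>x. c < x \<Longrightarrow> a \<le> f x" "continuous (at_right c) f"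
  shows "a \<le> f c"
proof (rule tendsto_le[OF trivial_limit_at_right_real])
  show "(f \<longlongrightarrow> f c) (at_right c)"
    using assms(2) by (simp add: continuous_within)
  show "\<forall>\<^sub>F x in at_right c. a \<le> f x"
    using eventually_at_right_less[of c] by eventually_elim (rule assms(1))
qed simp

theorem sup_entropy_le_rate_mult:
  assumes pX: "process pX" and pY: "process pY" and gen: "\<And>n. generates pX pY n (\<Phi> n)"
    and ach: "achievable_by pX \<Phi> R"
  shows "sup_entropy pY \<le> R * sup_entropy pX"
proof -
  have "sup_entropy pY \<le> R' * l" if "R < R'" "sup_entropy pX < l" for R' l
  proof (rule sup_entropy_le[OF pY achievable_upper_tail_vanishes[OF pX pY gen]])
    show "achievable_by pX \<Phi> R'"
      using achievable_by_mono[OF pX ach] that by simp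
    show "0 < R'"
      using achievable_by_nonneg[OF ach] that by simp
    show "upper_tail_vanishes pX l"
      by (rule upper_tail_vanishes_above[OF pX that(2)])
  qed simp
  then have "sup_entropy pY \<le> R' * sup_entropy pX" if "R < R'" for R'
    using that le_of_forall_gt_continuous[where f="\<lambda>l. R' * l"] continuous_mult_left continuous_ident
    by blast
  then show ?thesis
    using le_of_forall_gt_continuous[where f="\<lambda>R. R * sup_entropy pX"] continuous_mult_right continuous_ident
    by blast
qed

theorem inf_entropy_le_rate_mult:
  assumes pX: "process pX" and pY: "process pY" and gen: "\<And>n. generates pX pY n (\<Phi> n)"
    and ach: "achievable_by pX \<Phi> R"
  shows "inf_entropy pY \<le> R * inf_entropy pX"
proof -
  have "inf_entropy pY \<le> R' * inf_entropy pX" if "R < R'" for R'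
  proof (rule dense_le)
    have "0 < R'"
      using achievable_by_nonneg[OF ach] that by simp
    fix lY assume "lY < inf_entropy pY"
    then have tail: "lower_tail_vanishes pY lY"
      by (rule lower_tail_vanishes_below[OF pY])
    show "lY \<le> R' * inf_entropy pX"
    proof (cases "0 < lY")
      case True
      have "lY / R' \<le> inf_entropy pX"
      proof (rule dense_le_bounded)
        show "0 < lY / R'"
          using True \<open>0 < R'\<close> by simp
        fix l assume "0 < l" "l < lY / R'"
        have "lower_tail_vanishes pX l"
        proof (rule lower_tail_vanishes_of_floor_mult[OF pX \<open>0 < R'\<close> _ \<open>0 < l\<close> \<open>l < lY / R'\<close>])
          show "(\<lambda>n. prob_len pX (nat \<lfloor>real n * R'\<rfloor>) (\<lambda>x. info_rate pX (nat \<lfloor>real n * R'\<rfloor>) x \<le> lY / R')) \<longlonglongrightarrow> 0"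
            using achievable_by_mono[OF pX ach] that True \<open>0 < R'\<close>
            by (intro lower_tail_vanishes_along_floor_mult[OF pX pY gen _ \<open>0 < R'\<close> tail]) simp_all
        qed
        then show "l \<le> inf_entropy pX"
          by (rule le_inf_entropy[OF pX])
      qed
      then show ?thesis
        using \<open>0 < R'\<close> by (simp add: field_simps)
    next
      case False
      have "0 \<le> R' * inf_entropy pX"
        using \<open>0 < R'\<close> inf_entropy_nonneg[OF pX] by simp
      then show ?thesis
        using False by linarith
    qed
  qed
  then show ?thesis
    using le_of_forall_gt_continuous[where f="\<lambda>R. R * inf_entropy pX"] continuous_mult_right continuous_ident
    by blast
qed


section \<open>Geometry of the interval algorithm\<close>

definition intv_lo :: "('a::{finite,linorder} list \<Rightarrow> real) \<Rightarrow> 'a list \<Rightarrow> real" where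
  "intv_lo p s = fst (intv_rev p (rev s))"

definition intv_hi :: "('a::{finite,linorder} list \<Rightarrow> real) \<Rightarrow> 'a list \<Rightarrow> real" where
  "intv_hi p s = snd (intv_rev p (rev s))"

definition cond_cdf_less :: "('a::{finite,linorder} list \<Rightarrow> real) \<Rightarrow> 'a list \<Rightarrow> 'a \<Rightarrow> real" where
  "cond_cdf_less p s x = (\<Sum>k\<in>{k. k < x}. cond_prob p s k)"

definition cond_cdf :: "('a::{finite,linorder} list \<Rightarrow> real) \<Rightarrow> 'a list \<Rightarrow> 'a \<Rightarrow> real" where
  "cond_cdf p s x = (\<Sum>k\<in>{k. k \<le> x}. cond_prob p s k)"

lemma intv_eq: "intv p s = {intv_lo p s ..< intv_hi p s}"
  unfolding intv_def intv_lo_def intv_hi_def by (simp add: split_beta)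

lemma intv_lo_Nil [simp]: "intv_lo p [] = 0"
  and intv_hi_Nil [simp]: "intv_hi p [] = 1"
  unfolding intv_lo_def intv_hi_def by simp_all

lemma intv_lo_snoc: "intv_lo p (s @ [x]) = intv_lo p s + (intv_hi p s - intv_lo p s) * cond_cdf_less p s x"
  and intv_hi_snoc: "intv_hi p (s @ [x]) = intv_lo p s + (intv_hi p s - intv_lo p s) * cond_cdf p s x"
  unfolding intv_lo_def intv_hi_def cond_cdf_less_def cond_cdf_def by (simp_all add: Let_def split_beta)

lemma cond_prob_nonneg: "process p \<Longrightarrow> 0 \<le> cond_prob p s k"
  unfolding cond_prob_def by (simp add: process_nonneg)

lemma sum_cond_prob:
  assumes "process p" "p s \<noteq> 0"
  shows "(\<Sum>k\<in>UNIV. cond_prob p s k) = 1"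
  unfolding cond_prob_def using process_sum_snoc[OF assms(1), of s] assms(2)
  by (simp add: sum_divide_distrib[symmetric])

lemma cond_cdf_eq: "cond_cdf p s x = cond_cdf_less p s x + cond_prob p s x"
proof -
  have "{k. k \<le> x} = insert x {k. k < x}"
    by auto
  then show ?thesis
    unfolding cond_cdf_def cond_cdf_less_def by simp
qed

lemma cond_cdf_le_1:
  assumes "process p"
  shows "cond_cdf p s x \<le> 1"
proof (cases "p s = 0")
  case True
  then show ?thesis
    by (simp add: cond_cdf_def cond_prob_def)
next
  case False
  have "cond_cdf p s x \<le> (\<Sum>k\<in>UNIV. cond_prob p s k)"
    unfolding cond_cdf_def by (rule sum_mono2) (auto simp: cond_prob_nonneg[OF assms])
  then show ?thesis
    using sum_cond_prob[OF assms False] by simp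
qed

lemma intv_length: 
  assumes "process p"
  shows "intv_hi p s - intv_lo p s = p s"
proof (induction s rule: rev_induct)
  case (snoc x s)
  have "intv_hi p (s @ [x]) - intv_lo p (s @ [x]) = p s * cond_prob p s x"
    unfolding intv_hi_snoc intv_lo_snoc cond_cdf_eq using snoc by (simp add: algebra_simps)
  also have "\<dots> = p (s @ [x])"
  proof (cases "p s = 0")
    case True
    then show ?thesis
      using process_prefix_le[OF assms, of s "s @ [x]"] process_nonneg[OF assms, of "s @ [x]"] by simp
  qed (simp add: cond_prob_def)
  finally show ?case .
qed (simp add: process_Nil[OF assms])

lemma intv_lo_le_hi: "process p \<Longrightarrow> intv_lo p s \<le> intv_hi p s"
  using intv_length[of p s] process_nonneg[of p s] by simp

lemma intv_snoc_subset:
  assumes "process p"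
  shows "intv p (s @ [x]) \<subseteq> intv p s"
proof -
  have w: "0 \<le> intv_hi p s - intv_lo p s"
    using intv_lo_le_hi[OF assms] by simp
  have "0 \<le> cond_cdf_less p s x"
    unfolding cond_cdf_less_def by (simp add: sum_nonneg cond_prob_nonneg[OF assms])
  then have "intv_lo p s \<le> intv_lo p (s @ [x])"
    unfolding intv_lo_snoc using w by simp
  moreover have "(intv_hi p s - intv_lo p s) * cond_cdf p s x \<le> intv_hi p s - intv_lo p s"
    using w cond_cdf_le_1[OF assms] by (simp add: mult_left_le)
  then have "intv_hi p (s @ [x]) \<le> intv_hi p s"
    unfolding intv_hi_snoc by simp
  ultimately show ?thesis
    unfolding intv_eq by auto
qed

lemma intv_prefix_subset:
  assumes "process p" "prefix s xs"
  shows "intv p xs \<subseteq> intv p s"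
proof -
  obtain t where "xs = s @ t"
    using assms(2) unfolding prefix_def by blast
  moreover have "intv p (s @ t) \<subseteq> intv p s" for t
  proof (induction t rule: rev_induct)
    case (snoc x t)
    then show ?case
      using intv_snoc_subset[OF assms(1), of "s @ t" x] by simp
  qed simp
  ultimately show ?thesis
    by simp
qed

lemma intv_subset_unit: "process p \<Longrightarrow> intv p xs \<subseteq> {0..<1}"
  using intv_prefix_subset[of p "[]" xs] by (simp add: intv_eq)

lemma intv_disjoint:
  assumes "process p" "length xs = length xs'" "xs \<noteq> xs'"
  shows "intv p xs \<inter> intv p xs' = {}"
proof -
  have "\<not> prefix xs xs'" "\<not> prefix xs' xs"
    using assms(2,3) by (auto simp: prefix_def)
  then have "xs \<parallel> xs'"
    by blast
  then obtain as b bs c cs where dec: "b \<noteq> c" "xs = as @ b # bs" "xs' = as @ c # cs"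
    using parallel_decomp by blast
  have siblings: "intv p (as @ [u]) \<inter> intv p (as @ [v]) = {}" if "u < v" for u v
  proof -
    have "cond_cdf p as u \<le> cond_cdf_less p as v"
      unfolding cond_cdf_def cond_cdf_less_def
      by (rule sum_mono2) (use that in \<open>auto simp: cond_prob_nonneg[OF assms(1)]\<close>)
    then have "intv_hi p (as @ [u]) \<le> intv_lo p (as @ [v])"
      unfolding intv_lo_snoc intv_hi_snoc using intv_lo_le_hi[OF assms(1), of as]
      by (simp add: mult_left_mono)
    then show ?thesis
      unfolding intv_eq by auto
  qed
  have "intv p xs \<subseteq> intv p (as @ [b])" "intv p xs' \<subseteq> intv p (as @ [c])"
    using intv_prefix_subset[OF assms(1)] dec(2,3) by (simp_all add: prefix_def)
  moreover have "intv p (as @ [b]) \<inter> intv p (as @ [c]) = {}"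
  proof (cases "b < c")
    case False
    then have "c < b"
      using dec(1) by simp
    then show ?thesis
      using siblings by blast
  qed (rule siblings)
  ultimately show ?thesis
    by blast
qed

lemma intv_snoc_cover:
  assumes "process p" "t \<in> intv p s"
  shows "\<exists>k. t \<in> intv p (s @ [k])"
proof -
  define a where "a = intv_lo p s"
  define w where "w = intv_hi p s - intv_lo p s"
  have t: "a \<le> t" "t < a + w"
    using assms(2) unfolding intv_eq a_def w_def by auto
  have "p s \<noteq> 0"
    using t intv_length[OF assms(1), of s] unfolding w_def by auto
  define K where "K = {k. t < a + w * cond_cdf p s k}"
  have "cond_cdf p s (Max UNIV) = 1"
    using sum_cond_prob[OF assms(1) \<open>p s \<noteq> 0\<close>] by (simp add: cond_cdf_def)
  then have "Max UNIV \<in> K"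
    using t unfolding K_def by simp
  define k where "k = Min K"
  have "k \<in> K" and k_min: "\<And>j. j \<in> K \<Longrightarrow> k \<le> j"
    using \<open>Max UNIV \<in> K\<close> unfolding k_def by (auto intro: Min_in)
  have "a + w * cond_cdf_less p s k \<le> t"
  proof (cases "{j. j < k} = {}")
    case True
    then show ?thesis
      using t by (simp add: cond_cdf_less_def)
  next
    case False
    define j where "j = Max {j. j < k}"
    have "j < k"
      unfolding j_def using False by (metis Max_in finite mem_Collect_eq)
    then have "j \<notin> K"
      using k_min by fastforce
    moreover have "{i. i \<le> j} = {i. i < k}"
      using \<open>j < k\<close> by (auto simp: j_def intro: Max_ge)
    then have "cond_cdf p s j = cond_cdf_less p s k"
      unfolding cond_cdf_def cond_cdf_less_def by simp
    ultimately show ?thesis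
      unfolding K_def by simp
  qed
  then have "t \<in> intv p (s @ [k])"
    using \<open>k \<in> K\<close> unfolding intv_eq intv_lo_snoc intv_hi_snoc K_def a_def w_def by simp
  then show ?thesis ..
qed

lemma intv_cover:
  assumes "process p" "t \<in> {0..<1}"
  shows "\<exists>xs\<in>words m. t \<in> intv p xs"
proof (induction m)
  case 0
  then show ?case
    using assms(2) by (auto simp: intv_eq)
next
  case (Suc m)
  then obtain s where "length s = m" "t \<in> intv p s"
    by auto
  then show ?case
    using intv_snoc_cover[OF assms(1)] by fastforce
qed

lemma measure_intv: "process p \<Longrightarrow> measure lborel (intv p xs) = p xs"
  unfolding intv_eq using intv_lo_le_hi[of p xs] intv_length[of p xs] by simp

lemma fmeasurable_subset_unit:
  assumes "A \<subseteq> {0..<1::real}" "A \<in> sets lborel"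
  shows "A \<in> fmeasurable lborel"
proof (rule fmeasurableI[OF assms(2)])
  have "emeasure lborel A \<le> emeasure lborel {0..<1::real}"
    using assms by (intro emeasure_mono) auto
  then show "emeasure lborel A < \<infinity>"
    by (simp add: order_le_less_trans)
qed

lemma measure_UN_disjoint_unit:
  fixes A :: "'i \<Rightarrow> real set"
  assumes "finite I" "\<And>i. i \<in> I \<Longrightarrow> A i \<subseteq> {0..<1}" "\<And>i. i \<in> I \<Longrightarrow> A i \<in> sets lborel"
    "\<And>i j. i \<in> I \<Longrightarrow> j \<in> I \<Longrightarrow> i \<noteq> j \<Longrightarrow> A i \<inter> A j = {}"
  shows "measure lborel (\<Union>i\<in>I. A i) = (\<Sum>i\<in>I. measure lborel (A i))"
proof (rule measure_UNION'[OF assms(1)])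
  show "A i \<in> fmeasurable lborel" if "i \<in> I" for i
    using assms(2,3)[OF that] by (rule fmeasurable_subset_unit)
  show "pairwise (\<lambda>i j. disjnt (A i) (A j)) I"
    using assms(4) by (auto simp: pairwise_def disjnt_def)
qed

lemma measure_Ico_inter_le:
  fixes a b c d :: real
  assumes "a \<le> b"
  shows "measure lborel ({a..<b} \<inter> {c..<d})
    \<le> (if {a..<b} \<subseteq> {c..<d} then b - a else 0)
       + (if c \<in> {a..<b} then b - a else 0) + (if d \<in> {a..<b} then b - a else 0)"
proof -
  have "{a..<b} \<in> fmeasurable lborel"
    using assms by (intro fmeasurableI) auto
  then have "measure lborel ({a..<b} \<inter> {c..<d}) \<le> measure lborel {a..<b}"
    by (intro measure_mono_fmeasurable) auto
  then have le: "measure lborel ({a..<b} \<inter> {c..<d}) \<le> b - a"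
    using assms by simp
  show ?thesis
  proof (cases "{a..<b} \<subseteq> {c..<d} \<or> c \<in> {a..<b} \<or> d \<in> {a..<b}")
    case True
    then show ?thesis
      using le assms by (smt (verit))
  next
    case False
    have "{a..<b} \<inter> {c..<d} = {}"
    proof (rule ccontr)
      assume "{a..<b} \<inter> {c..<d} \<noteq> {}"
      then obtain t where "t \<in> {a..<b} \<inter> {c..<d}"
        by blast
      then have "c < a" "b \<le> d"
        using False by auto
      then show False
        using False by auto
    qed
    then have "measure lborel ({a..<b} \<inter> {c..<d}) = 0"
      by (simp only: measure_empty)
    then show ?thesis
      using assms by (smt (verit))
  qed
qed

lemma sum_intv_containing_le:
  assumes p: "process p" and "A \<subseteq> words m" and "\<And>xs. xs \<in> A \<Longrightarrow> p xs \<le> \<delta>" and "0 \<le> \<delta>"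
  shows "(\<Sum>xs\<in>A. if t \<in> intv p xs then p xs else 0) \<le> \<delta>"
proof (cases "\<exists>xs\<in>A. t \<in> intv p xs")
  case True
  then obtain xs where xs: "xs \<in> A" "t \<in> intv p xs"
    by blast
  have "finite A"
    using assms(2) finite_subset finite_words by blast
  have "\<not> t \<in> intv p ys" if "ys \<in> A - {xs}" for ys
  proof
    assume "t \<in> intv p ys"
    moreover have "length ys = length xs" "ys \<noteq> xs"
      using that xs(1) assms(2) by auto
    ultimately show False
      using intv_disjoint[OF p \<open>length ys = length xs\<close> \<open>ys \<noteq> xs\<close>] xs(2) by blast
  qed
  then have "(\<Sum>ys\<in>A. if t \<in> intv p ys then p ys else 0) = (\<Sum>ys\<in>{xs}. if t \<in> intv p ys then p ys else 0)"
    by (intro sum.mono_neutral_right[OF \<open>finite A\<close>]) (use xs(1) in simp_all)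
  then show ?thesis
    using xs assms(3) by simp
qed (simp add: \<open>0 \<le> \<delta>\<close>)

text \<open>Only the at most two coin intervals that contain an endpoint of J_y meet J_y without
  lying inside it.\<close>
lemma sum_measure_intv_inter_le:
  assumes pX: "process pX" and pY: "process pY" and "A \<subseteq> words m"
    and small: "\<And>xs. xs \<in> A \<Longrightarrow> pX xs \<le> \<delta>" and "0 \<le> \<delta>"
  shows "(\<Sum>xs\<in>A. measure lborel (intv pX xs \<inter> intv pY y))
    \<le> (\<Sum>xs\<in>{xs\<in>A. intv pX xs \<subseteq> intv pY y}. pX xs) + 2 * \<delta>"
proof -
  define c where "c = intv_lo pY y"
  define d where "d = intv_hi pY y"
  have "finite A"
    using assms(3) finite_subset finite_words by blast
  have J: "intv pY y = {c..<d}"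
    by (simp add: intv_eq c_def d_def)
  have "measure lborel (intv pX xs \<inter> intv pY y)
      \<le> (if intv pX xs \<subseteq> intv pY y then pX xs else 0)
         + (if c \<in> intv pX xs then pX xs else 0) + (if d \<in> intv pX xs then pX xs else 0)" for xs
    using measure_Ico_inter_le[OF intv_lo_le_hi[OF pX, of xs], of c d]
    by (simp only: J intv_eq[of pX xs] intv_length[OF pX])
  then have "(\<Sum>xs\<in>A. measure lborel (intv pX xs \<inter> intv pY y))
      \<le> (\<Sum>xs\<in>A. (if intv pX xs \<subseteq> intv pY y then pX xs else 0)
           + (if c \<in> intv pX xs then pX xs else 0) + (if d \<in> intv pX xs then pX xs else 0))"
    by (rule sum_mono)
  also have "\<dots> \<le> (\<Sum>xs\<in>{xs\<in>A. intv pX xs \<subseteq> intv pY y}. pX xs) + \<delta> + \<delta>"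
    unfolding sum.distrib sum.inter_filter[OF \<open>finite A\<close>]
    using sum_intv_containing_le[OF pX assms(3) small \<open>0 \<le> \<delta>\<close>] by (intro add_mono) simp_all
  finally show ?thesis
    by simp
qed


lemma intv_sets [simp]: "intv p xs \<in> sets borel"
  unfolding intv_eq by simp

lemma measure_UN_intv:
  assumes p: "process p" and "B \<subseteq> words n"
  shows "measure lborel (\<Union>y\<in>B. intv p y) = (\<Sum>y\<in>B. p y)"
proof -
  have "finite B"
    using assms(2) finite_subset finite_words by blast
  have "measure lborel (\<Union>y\<in>B. intv p y) = (\<Sum>y\<in>B. measure lborel (intv p y))"
  proof (rule measure_UN_disjoint_unit[OF \<open>finite B\<close>])
    show "intv p y \<subseteq> {0..<1}" for y
      by (rule intv_subset_unit[OF p])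
    show "intv p y \<inter> intv p y' = {}" if "y \<in> B" "y' \<in> B" "y \<noteq> y'" for y y'
      using that assms(2) by (intro intv_disjoint[OF p]) auto
  qed simp
  then show ?thesis
    by (simp add: measure_intv[OF p])
qed

lemma measure_Int_UN_intv:
  assumes p: "process p" and B: "B \<subseteq> words n" and "A \<in> sets borel"
  shows "measure lborel (A \<inter> (\<Union>y\<in>B. intv p y)) = (\<Sum>y\<in>B. measure lborel (A \<inter> intv p y))"
proof -
  have "finite B"
    using B finite_subset finite_words by blast
  have "A \<inter> (\<Union>y\<in>B. intv p y) = (\<Union>y\<in>B. A \<inter> intv p y)"
    by blast
  also have "measure lborel \<dots> = (\<Sum>y\<in>B. measure lborel (A \<inter> intv p y))"
  proof (rule measure_UN_disjoint_unit[OF \<open>finite B\<close>])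
    show "A \<inter> intv p y \<subseteq> {0..<1}" for y
      using intv_subset_unit[OF p, of y] by blast
    show "(A \<inter> intv p y) \<inter> (A \<inter> intv p y') = {}" if "y \<in> B" "y' \<in> B" "y \<noteq> y'" for y y'
      using that B intv_disjoint[OF p, of y y'] by auto
  qed (use \<open>A \<in> sets borel\<close> in \<open>simp add: sets.Int\<close>)
  finally show ?thesis .
qed

lemma measure_intv_split:
  assumes p: "process p" and "G \<in> sets borel"
  shows "p xs = measure lborel (intv p xs \<inter> G) + measure lborel (intv p xs - G)"
proof -
  have "intv p xs \<inter> G \<in> fmeasurable lborel" "intv p xs - G \<in> fmeasurable lborel"
    using intv_subset_unit[OF p, of xs] assms(2)
    by (auto intro!: fmeasurable_subset_unit)
  then have "measure lborel ((intv p xs \<inter> G) \<union> (intv p xs - G))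
      = measure lborel (intv p xs \<inter> G) + measure lborel (intv p xs - G)"
    by (intro measure_Union) (auto simp: fmeasurable_def)
  moreover have "(intv p xs \<inter> G) \<union> (intv p xs - G) = intv p xs"
    by blast
  ultimately show ?thesis
    using measure_intv[OF p] by simp
qed

lemma sum_measure_intv_diff_le:
  assumes p: "process p" and "S \<subseteq> words m" and G: "G \<subseteq> {0..<1}" "G \<in> sets borel"
  shows "(\<Sum>xs\<in>S. measure lborel (intv p xs - G)) \<le> 1 - measure lborel G"
proof -
  have "finite S"
    using assms(2) finite_subset finite_words by blast
  have "(\<Sum>xs\<in>S. measure lborel (intv p xs - G)) = measure lborel (\<Union>xs\<in>S. intv p xs - G)"
  proof (rule measure_UN_disjoint_unit[OF \<open>finite S\<close>, symmetric])
    show "intv p xs - G \<subseteq> {0..<1}" for xs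
      using intv_subset_unit[OF p, of xs] by blast
    show "(intv p xs - G) \<inter> (intv p xs' - G) = {}" if "xs \<in> S" "xs' \<in> S" "xs \<noteq> xs'" for xs xs'
      using that assms(2) intv_disjoint[OF p, of xs xs'] by auto
  qed (use G(2) in \<open>simp add: sets.Diff\<close>)
  also have "\<dots> \<le> measure lborel ({0..<1} - G)"
  proof (rule measure_mono_fmeasurable)
    show "(\<Union>xs\<in>S. intv p xs - G) \<subseteq> {0..<1} - G"
      using intv_subset_unit[OF p] by blast
    have "(\<Union>xs\<in>S. intv p xs) \<in> sets borel"
      using \<open>finite S\<close> by (intro sets.finite_UN) simp_all
    moreover have "(\<Union>xs\<in>S. intv p xs - G) = (\<Union>xs\<in>S. intv p xs) - G"
      by blast
    ultimately show "(\<Union>xs\<in>S. intv p xs - G) \<in> sets lborel"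
      using G(2) by (simp add: sets.Diff)
    show "{0..<1} - G \<in> fmeasurable lborel"
      using G(2) by (intro fmeasurable_subset_unit) auto
  qed
  also have "\<dots> = 1 - measure lborel G"
    using G by (subst measure_Diff) auto
  finally show ?thesis .
qed

section \<open>The interval algorithm\<close>

lemma interval_alg_eq_None:
  "interval_alg pX pY n s = None \<longleftrightarrow> (\<forall>y. length y = n \<longrightarrow> \<not> intv pX s \<subseteq> intv pY y)"
  unfolding interval_alg_def by auto

lemma interval_alg_SomeD:
  assumes "interval_alg pX pY n s = Some y"
  shows "length y = n" "intv pX s \<subseteq> intv pY y"
proof -
  have ex: "\<exists>y. length y = n \<and> intv pX s \<subseteq> intv pY y"
    using assms unfolding interval_alg_def by (auto split: if_splits)
  then have "y = (SOME y. length y = n \<and> intv pX s \<subseteq> intv pY y)"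
    using assms unfolding interval_alg_def by simp
  then show "length y = n" "intv pX s \<subseteq> intv pY y"
    using someI_ex[OF ex] by simp_all
qed

lemma interval_alg_stopped_iff:
  assumes "process pX"
  shows "(\<exists>s. is_leaf (interval_alg pX pY n) s \<and> prefix s xs) \<longleftrightarrow> interval_alg pX pY n xs \<noteq> None"
proof
  assume "\<exists>s. is_leaf (interval_alg pX pY n) s \<and> prefix s xs"
  then obtain s where "is_leaf (interval_alg pX pY n) s" "prefix s xs"
    by blast
  then show "interval_alg pX pY n xs \<noteq> None"
    using intv_prefix_subset[OF assms] unfolding is_leaf_def interval_alg_eq_None by blast
next
  define \<phi> where "\<phi> = interval_alg pX pY n"
  assume "interval_alg pX pY n xs \<noteq> None"
  then have stops: "\<phi> (take (length xs) xs) \<noteq> None"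
    by (simp add: \<phi>_def)
  define k where "k = (LEAST k. \<phi> (take k xs) \<noteq> None)"
  have k: "\<phi> (take k xs) \<noteq> None"
    unfolding k_def by (rule LeastI[of "\<lambda>k. \<phi> (take k xs) \<noteq> None", OF stops])
  have k_min: "\<phi> (take j xs) = None" if "j < k" for j
    using not_less_Least[OF that[unfolded k_def]] by blast
  have "is_leaf \<phi> (take k xs)"
    unfolding is_leaf_def
  proof (intro conjI allI impI k)
    fix s assume s: "strict_prefix s (take k xs)"
    then have "prefix s xs"
      by (meson prefix_order.dual_order.trans prefix_order.less_imp_le take_is_prefix)
    then have "s = take (length s) xs"
      by (metis append_eq_conv_conj prefix_def)
    moreover have "length s < k"
      using prefix_length_less[OF s] by simp
    ultimately show "\<phi> s = None"
      using k_min by metis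
  qed
  then show "\<exists>s. is_leaf (interval_alg pX pY n) s \<and> prefix s xs"
    unfolding \<phi>_def using take_is_prefix by blast
qed

lemma sum_leaves_interval_alg:
  assumes pX: "process pX" and pY: "process pY" and "length y = n"
  shows "(\<Sum>s\<in>leaves_within (interval_alg pX pY n) m (\<lambda>z. z = y). pX s)
    = prob_len pX m (\<lambda>xs. intv pX xs \<subseteq> intv pY y)"
proof -
  define \<phi> where "\<phi> = interval_alg pX pY n"
  have "prob_len pX m (\<lambda>xs. \<exists>s. is_leaf \<phi> s \<and> the (\<phi> s) = y \<and> prefix s xs)
      = prob_len pX m (\<lambda>xs. intv pX xs \<subseteq> intv pY y)"
  proof (rule antisym; rule prob_len_mono[OF pX])
    fix xs assume "\<exists>s. is_leaf \<phi> s \<and> the (\<phi> s) = y \<and> prefix s xs"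
    then obtain s where s: "is_leaf \<phi> s" "the (\<phi> s) = y" "prefix s xs"
      by blast
    then have "\<phi> s = Some y"
      using leaf_Some[OF s(1)] by simp
    then have "intv pX s \<subseteq> intv pY y"
      unfolding \<phi>_def by (rule interval_alg_SomeD(2))
    then show "intv pX xs \<subseteq> intv pY y"
      using intv_prefix_subset[OF pX s(3)] by blast
  next
    fix xs assume sub: "intv pX xs \<subseteq> intv pY y" and "0 < pX xs"
    have "\<phi> xs \<noteq> None"
      using sub \<open>length y = n\<close> unfolding \<phi>_def interval_alg_eq_None by blast
    then obtain s where s: "is_leaf \<phi> s" "prefix s xs"
      using interval_alg_stopped_iff[OF pX] unfolding \<phi>_def by blast
    define y' where "y' = the (\<phi> s)"
    have "\<phi> s = Some y'"
      using leaf_Some[OF s(1)] unfolding y'_def .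
    then have "length y' = n" "intv pX s \<subseteq> intv pY y'"
      unfolding \<phi>_def by (rule interval_alg_SomeD)+
    have "intv pX xs \<noteq> {}"
      using \<open>0 < pX xs\<close> intv_length[OF pX, of xs] unfolding intv_eq by auto
    moreover have "intv pX xs \<subseteq> intv pY y'"
      using \<open>intv pX s \<subseteq> intv pY y'\<close> intv_prefix_subset[OF pX s(2)] by blast
    ultimately have "intv pY y' \<inter> intv pY y \<noteq> {}"
      using sub by blast
    then have "y' = y"
      using intv_disjoint[OF pY, of y' y] \<open>length y' = n\<close> \<open>length y = n\<close> by argo
    then show "\<exists>s. is_leaf \<phi> s \<and> the (\<phi> s) = y \<and> prefix s xs"
      using s unfolding y'_def by blast
  qed
  then show ?thesis
    unfolding sum_leaves_within[OF pX] \<phi>_def .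
qed

lemma prob_len_intv_subset_le:
  assumes pX: "process pX" and pY: "process pY"
  shows "prob_len pX m (\<lambda>xs. intv pX xs \<subseteq> intv pY y) \<le> pY y"
proof -
  define T where "T = {xs\<in>words m. intv pX xs \<subseteq> intv pY y}"
  have "T \<subseteq> words m" "finite T"
    unfolding T_def by (auto intro: finite_subset[OF _ finite_words])
  have "prob_len pX m (\<lambda>xs. intv pX xs \<subseteq> intv pY y) = measure lborel (\<Union>xs\<in>T. intv pX xs)"
    using measure_UN_intv[OF pX \<open>T \<subseteq> words m\<close>] by (simp add: prob_len_def T_def)
  also have "\<dots> \<le> measure lborel (intv pY y)"
    using intv_subset_unit[OF pY] intv_sets sets.finite_UN[OF \<open>finite T\<close>]
    by (intro measure_mono_fmeasurable fmeasurable_subset_unit) (auto simp: T_def)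
  also have "\<dots> = pY y"
    by (rule measure_intv[OF pY])
  finally show ?thesis .
qed

lemma le_prob_len_intv_subset:
  assumes pX: "process pX" and pY: "process pY"
    and small: "\<And>xs. length xs = m \<Longrightarrow> pX xs \<le> \<delta>" and "0 \<le> \<delta>"
  shows "pY y \<le> prob_len pX m (\<lambda>xs. intv pX xs \<subseteq> intv pY y) + 2 * \<delta>"
proof -
  have "intv pY y = (\<Union>xs\<in>words m. intv pX xs \<inter> intv pY y)"
    using intv_cover[OF pX, of _ m] intv_subset_unit[OF pY, of y] by blast
  then have "pY y = measure lborel (\<Union>xs\<in>words m. intv pX xs \<inter> intv pY y)"
    using measure_intv[OF pY, of y] by simp
  also have "\<dots> = (\<Sum>xs\<in>words m. measure lborel (intv pX xs \<inter> intv pY y))"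
  proof (rule measure_UN_disjoint_unit[OF finite_words])
    show "intv pX xs \<inter> intv pY y \<subseteq> {0..<1}" for xs
      using intv_subset_unit[OF pY, of y] by blast
    show "(intv pX xs \<inter> intv pY y) \<inter> (intv pX xs' \<inter> intv pY y) = {}"
      if "xs \<in> words m" "xs' \<in> words m" "xs \<noteq> xs'" for xs xs'
      using that intv_disjoint[OF pX, of xs xs'] by auto
  qed (simp add: sets.Int)
  also have "\<dots> \<le> prob_len pX m (\<lambda>xs. intv pX xs \<subseteq> intv pY y) + 2 * \<delta>"
    using sum_measure_intv_inter_le[OF pX pY order_refl, of m \<delta> y] small \<open>0 \<le> \<delta>\<close>
    by (simp add: prob_len_def)
  finally show ?thesis .
qed

lemma card_likely_words_le:
  assumes p: "process p" and "0 < \<beta>"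
  shows "real (card {xs\<in>words n. \<beta> \<le> p xs}) \<le> 1 / \<beta>"
proof -
  define B where "B = {xs\<in>words n. \<beta> \<le> p xs}"
  have "B \<subseteq> words n"
    by (auto simp: B_def)
  have "real (card B) * \<beta> \<le> (\<Sum>xs\<in>B. p xs)"
    using sum_mono[of B "\<lambda>_. \<beta>" p] by (simp add: B_def)
  also have "\<dots> \<le> (\<Sum>xs\<in>words n. p xs)"
    by (rule sum_mono2[OF finite_words \<open>B \<subseteq> words n\<close>]) (simp add: process_nonneg[OF p])
  finally show ?thesis
    using process_sum_words[OF p] \<open>0 < \<beta>\<close> by (simp add: B_def field_simps)
qed

lemma unlikely_words_le_upper_tail:
  assumes p: "process p" and "0 < n"
  shows "1 - (\<Sum>xs\<in>{xs\<in>words n. 2 powr (- (real n * l)) \<le> p xs}. p xs)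
    \<le> prob_len p n (\<lambda>xs. l \<le> info_rate p n xs)"
proof -
  have "1 - (\<Sum>xs\<in>{xs\<in>words n. 2 powr (- (real n * l)) \<le> p xs}. p xs)
      = prob_len p n (\<lambda>xs. \<not> 2 powr (- (real n * l)) \<le> p xs)"
    using prob_len_compl[OF p, of n "\<lambda>xs. 2 powr (- (real n * l)) \<le> p xs"] by (simp add: prob_len_def)
  also have "\<dots> \<le> prob_len p n (\<lambda>xs. l \<le> info_rate p n xs)"
  proof (rule prob_len_mono[OF p])
    fix xs assume "\<not> 2 powr (- (real n * l)) \<le> p xs" "0 < p xs"
    then show "l \<le> info_rate p n xs"
      using le_info_rate_iff[of p xs n l] \<open>0 < n\<close> by linarith
  qed
  finally show ?thesis .
qed

lemma tendsto_two_powr_neg_mult: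
  assumes "0 < c"
  shows "(\<lambda>n. 2 powr (- (real n * c))) \<longlonglongrightarrow> 0"
proof -
  have "(\<lambda>n. 2 powr (- (real n * c))) = (\<lambda>n. (2 powr (- c)) ^ n)"
    by (simp add: powr_realpow[symmetric] powr_powr mult.commute)
  moreover have "(\<lambda>n. (2 powr (- c)) ^ n) \<longlonglongrightarrow> 0"
    using assms by (intro LIMSEQ_realpow_zero) (simp_all add: powr_less_one)
  ultimately show ?thesis
    by simp
qed

lemma eventually_words_le:
  assumes p: "process p" and "0 < inf_entropy p" "0 < \<delta>"
  shows "\<forall>\<^sub>F m in sequentially. \<forall>xs. length xs = m \<longrightarrow> p xs \<le> \<delta>"
proof -
  define l where "l = inf_entropy p / 2"
  have "0 < l" "l < inf_entropy p"
    using assms(2) unfolding l_def by auto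
  have "(\<lambda>m. 2 powr (- (real m * l))) \<longlonglongrightarrow> 0"
    by (rule tendsto_two_powr_neg_mult[OF \<open>0 < l\<close>])
  moreover have "(\<lambda>m. prob_len p m (\<lambda>xs. info_rate p m xs \<le> l)) \<longlonglongrightarrow> 0"
    using lower_tail_vanishes_below[OF p \<open>l < inf_entropy p\<close>] unfolding lower_tail_vanishes_def .
  ultimately have "\<forall>\<^sub>F m in sequentially. 2 powr (- (real m * l)) < \<delta>
      \<and> prob_len p m (\<lambda>xs. info_rate p m xs \<le> l) < \<delta> \<and> 0 < m"
    using \<open>0 < \<delta>\<close> by (intro eventually_conj order_tendstoD(2) eventually_gt_at_top)
  then show ?thesis
  proof eventually_elim
    case (elim m)
    show ?case
    proof (intro allI impI)
      fix xs :: "'a list" assume "length xs = m"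
      show "p xs \<le> \<delta>"
      proof (rule ccontr)
        assume "\<not> p xs \<le> \<delta>"
        then have "info_rate p m xs \<le> l"
          using info_rate_le_iff[of p xs m l] elim \<open>0 < \<delta>\<close> by simp
        then show False
          using member_le_prob_len[OF p \<open>length xs = m\<close>] elim \<open>\<not> p xs \<le> \<delta>\<close> by fastforce
      qed
    qed
  qed
qed


lemma has_sum_nonneg_exhausting:
  fixes f :: "'a \<Rightarrow> real"
  assumes nonneg: "\<And>x. x \<in> A \<Longrightarrow> 0 \<le> f x"
    and sub: "\<And>m. B m \<subseteq> A" and fin: "\<And>m. finite (B m)" and inc: "\<And>m. B m \<subseteq> B (Suc m)"
    and exhaust: "\<And>x. x \<in> A \<Longrightarrow> \<exists>m. x \<in> B m"
    and lim: "(\<lambda>m. sum f (B m)) \<longlonglongrightarrow> S"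
  shows "(f has_sum S) A"
proof -
  have "incseq (\<lambda>m. sum f (B m))"
    by (rule incseq_SucI, rule sum_mono2[OF fin inc]) (use nonneg sub in blast)
  then have below_S: "sum f (B m) \<le> S" for m
    using incseq_le[OF _ lim] by simp
  have finite_le: "sum f X \<le> S" if "finite X" "X \<subseteq> A" for X
  proof -
    have "\<exists>M. X \<subseteq> B M"
      using that
    proof (induction X rule: finite_induct)
      case (insert x X)
      then obtain M M' where "X \<subseteq> B M" "x \<in> B M'"
        using exhaust by blast
      then have "insert x X \<subseteq> B (max M M')"
        using lift_Suc_mono_le[of B, OF inc, of M "max M M'"] lift_Suc_mono_le[of B, OF inc, of M' "max M M'"]
        by auto
      then show ?case ..
    qed simp
    then obtain M where "X \<subseteq> B M" ..
    then have "sum f X \<le> sum f (B M)"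
      by (rule sum_mono2[OF fin]) (use nonneg sub in blast)
    then show ?thesis
      using below_S[of M] by simp
  qed
  have bdd: "bdd_above (sum f ` {X. X \<subseteq> A \<and> finite X})"
    by (rule bdd_aboveI[of _ S]) (use finite_le in auto)
  have "(f has_sum (SUP X\<in>{X. finite X \<and> X \<subseteq> A}. sum f X)) A"
    by (rule nonneg_bdd_above_has_sum[OF nonneg bdd])
  moreover have "(SUP X\<in>{X. finite X \<and> X \<subseteq> A}. sum f X) = S"
  proof (rule antisym)
    show "(SUP X\<in>{X. finite X \<and> X \<subseteq> A}. sum f X) \<le> S"
      by (rule cSUP_least) (auto intro: finite_le)
    have "sum f (B m) \<le> (SUP X\<in>{X. finite X \<and> X \<subseteq> A}. sum f X)" for m
      by (rule cSUP_upper) (use sub fin bdd in \<open>auto simp: conj_commute\<close>)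
    then show "S \<le> (SUP X\<in>{X. finite X \<and> X \<subseteq> A}. sum f X)"
      by (intro LIMSEQ_le_const2[OF lim]) auto
  qed
  ultimately show ?thesis
    by simp
qed

text \<open>The leaves of length at most m producing y cover all coin intervals of length m
  inside J_y, hence miss at most the two coin intervals containing an endpoint of J_y; their
  mass tends to zero when the coin has positive inf-entropy.\<close>
theorem interval_alg_generates:
  assumes pX: "process pX" and pY: "process pY" and H: "0 < inf_entropy pX"
  shows "generates pX pY n (interval_alg pX pY n)"
  unfolding generates_def
proof (intro conjI allI impI)
  fix s y
  assume "interval_alg pX pY n s = Some y"
  then show "length y = n"
    by (rule interval_alg_SomeD)
next
  fix y :: "'b list"
  assume y: "length y = n"
  define \<phi> where "\<phi> = interval_alg pX pY n"
  define F where "F m = prob_len pX m (\<lambda>xs. intv pX xs \<subseteq> intv pY y)" for m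
  have "F \<longlonglongrightarrow> pY y"
    unfolding tendsto_iff
  proof (intro allI impI)
    fix e :: real
    assume "0 < e"
    then have "\<forall>\<^sub>F m in sequentially. \<forall>xs. length xs = m \<longrightarrow> pX xs \<le> e / 4"
      by (intro eventually_words_le[OF pX H]) simp
    then show "\<forall>\<^sub>F m in sequentially. dist (F m) (pY y) < e"
    proof eventually_elim
      case (elim m)
      have "F m \<le> pY y"
        unfolding F_def by (rule prob_len_intv_subset_le[OF pX pY])
      moreover have "pY y \<le> F m + 2 * (e / 4)"
        unfolding F_def using elim \<open>0 < e\<close> by (intro le_prob_len_intv_subset[OF pX pY]) auto
      ultimately show ?case
        using \<open>0 < e\<close> by (simp add: dist_real_def)
    qed
  qed
  then have lim: "(\<lambda>m. sum pX (leaves_within \<phi> m (\<lambda>z. z = y))) \<longlonglongrightarrow> pY y"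
    unfolding F_def \<phi>_def sum_leaves_interval_alg[OF pX pY y] .
  show "(pX has_sum pY y) {s. is_leaf (interval_alg pX pY n) s \<and> interval_alg pX pY n s = Some y}"
    unfolding \<phi>_def[symmetric]
  proof (rule has_sum_nonneg_exhausting[OF _ _ finite_leaves_within _ _ lim])
    show "leaves_within \<phi> m (\<lambda>z. z = y) \<subseteq> {s. is_leaf \<phi> s \<and> \<phi> s = Some y}" for m
      unfolding leaves_within_def using leaf_Some by fastforce
    show "leaves_within \<phi> m (\<lambda>z. z = y) \<subseteq> leaves_within \<phi> (Suc m) (\<lambda>z. z = y)" for m
      unfolding leaves_within_def by auto
    show "\<exists>m. s \<in> leaves_within \<phi> m (\<lambda>z. z = y)" if "s \<in> {s. is_leaf \<phi> s \<and> \<phi> s = Some y}" for s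
      using that unfolding leaves_within_def by (intro exI[of _ "length s"]) auto
  qed (rule process_nonneg[OF pX])
qed


section \<open>Achievability by the interval algorithm\<close>

lemma prob_len_unstopped_small_le:
  assumes pX: "process pX" and pY: "process pY" and B: "B \<subseteq> words n" and "0 \<le> \<gamma>"
  shows "prob_len pX m (\<lambda>xs. interval_alg pX pY n xs = None \<and> pX xs \<le> \<gamma>)
    \<le> 1 - (\<Sum>y\<in>B. pY y) + 2 * \<gamma> * card B"
proof -
  define S where "S = {xs\<in>words m. interval_alg pX pY n xs = None \<and> pX xs \<le> \<gamma>}"
  define G where "G = (\<Union>y\<in>B. intv pY y)"
  have S: "S \<subseteq> words m" "finite S"
    unfolding S_def by (auto intro: finite_subset[OF _ finite_words])
  have "finite B"
    using B finite_subset finite_words by blast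
  then have G: "G \<subseteq> {0..<1}" "G \<in> sets borel"
    unfolding G_def using intv_subset_unit[OF pY] by (auto intro: sets.finite_UN)
  have "(\<Sum>xs\<in>S. measure lborel (intv pX xs \<inter> G))
      = (\<Sum>xs\<in>S. \<Sum>y\<in>B. measure lborel (intv pX xs \<inter> intv pY y))"
    unfolding G_def by (intro sum.cong refl measure_Int_UN_intv[OF pY B intv_sets])
  also have "\<dots> = (\<Sum>y\<in>B. \<Sum>xs\<in>S. measure lborel (intv pX xs \<inter> intv pY y))"
    by (rule sum.swap)
  also have "\<dots> \<le> (\<Sum>y\<in>B. 2 * \<gamma>)"
  proof (rule sum_mono)
    fix y assume "y \<in> B"
    then have empty: "{xs\<in>S. intv pX xs \<subseteq> intv pY y} = {}"
      using B by (auto simp: S_def interval_alg_eq_None)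
    have "(\<Sum>xs\<in>S. measure lborel (intv pX xs \<inter> intv pY y))
        \<le> (\<Sum>xs\<in>{xs\<in>S. intv pX xs \<subseteq> intv pY y}. pX xs) + 2 * \<gamma>"
      using \<open>0 \<le> \<gamma>\<close> by (intro sum_measure_intv_inter_le[OF pX pY S(1)]) (simp add: S_def)
    then show "(\<Sum>xs\<in>S. measure lborel (intv pX xs \<inter> intv pY y)) \<le> 2 * \<gamma>"
      unfolding empty by simp
  qed
  finally have inside: "(\<Sum>xs\<in>S. measure lborel (intv pX xs \<inter> G)) \<le> 2 * \<gamma> * card B"
    by (simp add: mult.commute)
  have "prob_len pX m (\<lambda>xs. interval_alg pX pY n xs = None \<and> pX xs \<le> \<gamma>)
      = (\<Sum>xs\<in>S. measure lborel (intv pX xs \<inter> G)) + (\<Sum>xs\<in>S. measure lborel (intv pX xs - G))"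
    unfolding sum.distrib[symmetric] prob_len_def S_def
    using measure_intv_split[OF pX G(2)] by (intro sum.cong) auto
  also have "\<dots> \<le> 2 * \<gamma> * card B + (1 - measure lborel G)"
    by (intro add_mono inside sum_measure_intv_diff_le[OF pX S(1) G])
  also have "measure lborel G = (\<Sum>y\<in>B. pY y)"
    unfolding G_def by (rule measure_UN_intv[OF pY B])
  finally show ?thesis
    by simp
qed

text \<open>The interval algorithm has not stopped after m coin flips only if the coin prefix is
  atypically likely, or the target word is atypically unlikely, or the coin interval straddles
  an endpoint of one of the at most 2^(n lY) likely target intervals.\<close>
lemma interval_alg_stop_exceeds_le:
  assumes pX: "process pX" and pY: "process pY" and "0 < m" "0 < n"
  shows "stop_exceeds pX (interval_alg pX pY n) (real m)
    \<le> prob_len pX m (\<lambda>x. info_rate pX m x \<le> lX) + prob_len pY n (\<lambda>y. lY \<le> info_rate pY n y)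
       + 2 * 2 powr (real n * lY - real m * lX)"
proof -
  define \<gamma> where "\<gamma> = 2 powr (- (real m * lX))"
  define \<beta> where "\<beta> = 2 powr (- (real n * lY))"
  define B where "B = {y\<in>words n. \<beta> \<le> pY y}"
  have B: "B \<subseteq> words n"
    unfolding B_def by auto
  have "stop_exceeds pX (interval_alg pX pY n) (real m)
      = prob_len pX m (\<lambda>x. interval_alg pX pY n x = None)"
    unfolding stop_exceeds_eq_prob_len[OF pX] interval_alg_stopped_iff[OF pX] by simp
  also have "\<dots> \<le> prob_len pX m (\<lambda>x. info_rate pX m x \<le> lX \<or> (interval_alg pX pY n x = None \<and> pX x \<le> \<gamma>))"
  proof (rule prob_len_mono[OF pX])
    fix x assume "interval_alg pX pY n x = None" "0 < pX x"
    then show "info_rate pX m x \<le> lX \<or> (interval_alg pX pY n x = None \<and> pX x \<le> \<gamma>)"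
      using info_rate_le_iff[of pX x m lX] \<open>0 < m\<close> unfolding \<gamma>_def by linarith
  qed
  also have "\<dots> \<le> prob_len pX m (\<lambda>x. info_rate pX m x \<le> lX)
      + prob_len pX m (\<lambda>x. interval_alg pX pY n x = None \<and> pX x \<le> \<gamma>)"
    by (rule prob_len_disj_le[OF pX])
  also have "prob_len pX m (\<lambda>x. interval_alg pX pY n x = None \<and> pX x \<le> \<gamma>)
      \<le> 1 - (\<Sum>y\<in>B. pY y) + 2 * \<gamma> * card B"
    by (rule prob_len_unstopped_small_le[OF pX pY B]) (simp add: \<gamma>_def)
  also have "1 - (\<Sum>y\<in>B. pY y) \<le> prob_len pY n (\<lambda>y. lY \<le> info_rate pY n y)"
    unfolding B_def \<beta>_def by (rule unlikely_words_le_upper_tail[OF pY \<open>0 < n\<close>])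
  also have "2 * \<gamma> * card B \<le> 2 * 2 powr (real n * lY - real m * lX)"
  proof -
    have "real (card B) \<le> 1 / \<beta>"
      unfolding B_def by (rule card_likely_words_le[OF pY]) (simp add: \<beta>_def)
    then have "\<gamma> * real (card B) \<le> \<gamma> * (1 / \<beta>)"
      by (rule mult_left_mono) (simp add: \<gamma>_def)
    also have "\<gamma> * (1 / \<beta>) = 2 powr (real n * lY - real m * lX)"
      by (simp add: \<gamma>_def \<beta>_def powr_diff[symmetric] powr_minus_divide)
    finally show ?thesis
      by simp
  qed
  finally show ?thesis
    by simp
qed

lemma interval_alg_achievable_of_tails:
  assumes pX: "process pX" and pY: "process pY" and "0 < R"
    and tailX: "lower_tail_vanishes pX lX" and "0 < lX"
    and tailY: "upper_tail_vanishes pY lY" and rates: "lY < R * lX"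
  shows "achievable_by pX (interval_alg pX pY) R"
proof -
  define m where "m n = nat \<lfloor>real n * R\<rfloor>" for n
  define c where "c = R * lX - lY"
  have "0 < c"
    using rates by (simp add: c_def)
  have m: "filterlim m at_top sequentially"
    unfolding m_def by (rule filterlim_nat_floor_mult[OF \<open>0 < R\<close>])
  have bound: "\<forall>\<^sub>F n in sequentially. stop_exceeds pX (interval_alg pX pY n) (real n * R)
      \<le> prob_len pX (m n) (\<lambda>x. info_rate pX (m n) x \<le> lX) + prob_len pY n (\<lambda>y. lY \<le> info_rate pY n y)
         + 2 * (2 powr lX * 2 powr (- (real n * c)))"
    using eventually_gt_at_top[of 0] m[unfolded filterlim_at_top, rule_format, of 1]
  proof eventually_elim
    case (elim n)
    have stop: "stop_exceeds pX (interval_alg pX pY n) (real n * R)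
        = stop_exceeds pX (interval_alg pX pY n) (real (m n))"
      unfolding m_def by (rule stop_exceeds_nat_floor[symmetric]) (use \<open>0 < R\<close> in simp)
    have "real n * R - 1 < real (m n)"
      unfolding m_def by (rule nat_floor_bounds(2)) (use \<open>0 < R\<close> in simp)
    then have "(real n * R - 1) * lX \<le> real (m n) * lX"
      using \<open>0 < lX\<close> by (simp add: mult_right_mono)
    then have "real n * lY - real (m n) * lX \<le> lX + (- (real n * c))"
      by (simp add: c_def algebra_simps)
    then have "2 powr (real n * lY - real (m n) * lX) \<le> 2 powr (lX + (- (real n * c)))"
      by simp
    also have "\<dots> = 2 powr lX * 2 powr (- (real n * c))"
      by (rule powr_add)
    finally show ?case
      using interval_alg_stop_exceeds_le[OF pX pY, of "m n" n lX lY] elim stop by simp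
  qed
  have "(\<lambda>n. prob_len pX (m n) (\<lambda>x. info_rate pX (m n) x \<le> lX) + prob_len pY n (\<lambda>y. lY \<le> info_rate pY n y)
      + 2 * (2 powr lX * 2 powr (- (real n * c)))) \<longlonglongrightarrow> 0 + 0 + 2 * (2 powr lX * 0)"
    using filterlim_compose[OF tailX[unfolded lower_tail_vanishes_def] m]
      tailY[unfolded upper_tail_vanishes_def] tendsto_two_powr_neg_mult[OF \<open>0 < c\<close>]
    by (intro tendsto_intros)
  then show ?thesis
    unfolding achievable_by_def
    using tendsto_sandwich[OF always_eventually[OF allI[OF stop_exceeds_nonneg[OF pX]]] bound tendsto_const]
    by simp
qed

theorem interval_alg_achievable:
  assumes pX: "process pX" and pY: "process pY" and H: "0 < inf_entropy pX"
    and R: "sup_entropy pY / inf_entropy pX < R"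
  shows "achievable_by pX (interval_alg pX pY) R"
proof -
  define HX where "HX = inf_entropy pX"
  define HY where "HY = sup_entropy pY"
  have "0 \<le> HY"
    unfolding HY_def by (rule sup_entropy_nonneg[OF pY])
  have "HY < R * HX"
    using R H by (simp add: HX_def HY_def divide_less_eq)
  moreover have "0 \<le> HY / HX"
    using \<open>0 \<le> HY\<close> H by (simp add: HX_def)
  then have "0 < R"
    using R by (simp add: HX_def HY_def)
  define lX where "lX = (HY / R + HX) / 2"
  define lY where "lY = (HY + R * lX) / 2"
  have "HY / R < HX"
    using \<open>HY < R * HX\<close> \<open>0 < R\<close> by (simp add: divide_less_eq mult.commute)
  then have "HY / R < lX" and "lX < HX"
    unfolding lX_def using \<open>0 < R\<close> by (simp_all add: field_simps)
  then have "HY < R * lX"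
    using \<open>0 < R\<close> by (simp add: divide_less_eq mult.commute)
  show ?thesis
  proof (rule interval_alg_achievable_of_tails[OF pX pY \<open>0 < R\<close>])
    show "lower_tail_vanishes pX lX"
      using lower_tail_vanishes_below[OF pX] \<open>lX < HX\<close> by (simp add: HX_def)
    show "0 < lX"
      using \<open>HY / R < lX\<close> \<open>0 \<le> HY\<close> \<open>0 < R\<close> by (smt (verit) divide_nonneg_pos)
    show "upper_tail_vanishes pY lY"
      using upper_tail_vanishes_above[OF pY] \<open>HY < R * lX\<close> by (simp add: HY_def lY_def)
    show "lY < R * lX"
      using \<open>HY < R * lX\<close> by (simp add: lY_def)
  qed
qed

section \<open>Optimal rates\<close>

lemma Inf_eq_threshold:
  fixes S :: "real set"
  assumes above: "\<And>R. r < R \<Longrightarrow> R \<in> S" and below: "\<And>R. R \<in> S \<Longrightarrow> r \<le> R"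
  shows "Inf S = r"
proof (rule antisym)
  have "S \<noteq> {}"
    using above[of "r + 1"] by auto
  then show "r \<le> Inf S"
    by (rule cInf_greatest[OF _ below])
  have "bdd_below S"
    using below by (rule bdd_belowI)
  show "Inf S \<le> r"
  proof (rule dense_ge)
    fix R assume "r < R"
    show "Inf S \<le> R"
      by (rule cInf_lower[OF above[OF \<open>r < R\<close>] \<open>bdd_below S\<close>])
  qed
qed

theorem optimal_rates:
  assumes pX: "process pX" and pY: "process pY" and H: "0 < inf_entropy pX"
    and converse: "\<And>\<Phi> R. (\<And>n. generates pX pY n (\<Phi> n)) \<Longrightarrow> achievable_by pX \<Phi> R
      \<Longrightarrow> sup_entropy pY \<le> R * inf_entropy pX"
  shows "int_rate pX pY = sup_entropy pY / inf_entropy pX \<and> opt_rate pX pY = sup_entropy pY / inf_entropy pX"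
proof -
  define r where "r = sup_entropy pY / inf_entropy pX"
  have gen: "generates pX pY n (interval_alg pX pY n)" for n
    by (rule interval_alg_generates[OF pX pY H])
  have ach: "achievable_by pX (interval_alg pX pY) R" if "r < R" for R
    using interval_alg_achievable[OF pX pY H] that by (simp add: r_def)
  have lower: "r \<le> R" if "\<And>n. generates pX pY n (\<Phi> n)" "achievable_by pX \<Phi> R" for \<Phi> R
    using converse[OF that] H by (simp add: r_def divide_le_eq)
  have "int_rate pX pY = r"
    unfolding int_rate_def using ach lower[OF gen] by (intro Inf_eq_threshold) simp_all
  moreover have "opt_rate pX pY = r"
    unfolding opt_rate_def using ach gen lower by (intro Inf_eq_threshold) blast+
  ultimately show ?thesis
    by (simp add: r_def)
qed

theorem corollary3:
  fixes pX :: "'x::{finite,linorder} list \<Rightarrow> real"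
    and pY :: "'y::{finite,linorder} list \<Rightarrow> real"
  assumes "process pX" and "process pY"
  shows "(sup_entropy pX = inf_entropy pX \<and> inf_entropy pX = entropy_rate pX \<and> entropy_rate pX > 0
            \<longrightarrow> int_rate pX pY = opt_rate pX pY \<and> opt_rate pX pY = sup_entropy pY / entropy_rate pX)
       \<and> (sup_entropy pY = inf_entropy pY \<and> inf_entropy pY = entropy_rate pY \<and> inf_entropy pX > 0
            \<longrightarrow> int_rate pX pY = opt_rate pX pY \<and> opt_rate pX pY = entropy_rate pY / inf_entropy pX)"
proof (intro conjI impI)
  assume h: "sup_entropy pX = inf_entropy pX \<and> inf_entropy pX = entropy_rate pX \<and> entropy_rate pX > 0"
  then have "0 < inf_entropy pX"
    by simp
  then have "int_rate pX pY = sup_entropy pY / inf_entropy pX \<and> opt_rate pX pY = sup_entropy pY / inf_entropy pX"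
  proof (rule optimal_rates[OF assms])
    fix \<Phi> R
    assume "\<And>n. generates pX pY n (\<Phi> n)" "achievable_by pX \<Phi> R"
    then show "sup_entropy pY \<le> R * inf_entropy pX"
      using sup_entropy_le_rate_mult[OF assms] h by metis
  qed
  then show "int_rate pX pY = opt_rate pX pY" "opt_rate pX pY = sup_entropy pY / entropy_rate pX"
    using h by simp_all
next
  assume h: "sup_entropy pY = inf_entropy pY \<and> inf_entropy pY = entropy_rate pY \<and> inf_entropy pX > 0"
  then have "0 < inf_entropy pX"
    by simp
  then have "int_rate pX pY = sup_entropy pY / inf_entropy pX \<and> opt_rate pX pY = sup_entropy pY / inf_entropy pX"
  proof (rule optimal_rates[OF assms])
    fix \<Phi> R
    assume "\<And>n. generates pX pY n (\<Phi> n)" "achievable_by pX \<Phi> R"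
    then show "sup_entropy pY \<le> R * inf_entropy pX"
      using inf_entropy_le_rate_mult[OF assms] h by metis
  qed
  then show "int_rate pX pY = opt_rate pX pY" "opt_rate pX pY = entropy_rate pY / inf_entropy pX"
    using h by simp_all
qed

end
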